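(* Let $\sigma>0$ and $h:[0,\sigma)\to\mathbb{R}^+$ be continuous, strictly increasing, with $\lim_{s\to\sigma^-}h(s)=+\infty$, and suppose there exists $\gamma\in[1,2)$ with $\lim_{s\to\sigma^-}(\sigma-s)^\gamma h(s)=C>0$. Let $H(s)=\int_0^s h$, $\psi(s)=\int_0^s e^{-H(t)}dt$, $L=\psi(\sigma)$, and $g(s)=e^{-H(\psi^{-1}(s))}$ on $[0,L]$ ($g(L)=0$). Let $R>0$ and $\Omega=B_R(0)\subset\mathbb{R}^N$. Then for $\lambda$ large enough there exists a subsolution $\underline v$ of $-\Delta v=\lambda g(v)$ in $B_R(0)$, $v=0$ on $\partial B_R(0)$ — namely $\underline v\in H^1_0(B_R(0))$ with $0\le\underline v\le L$ and $\int_{B_R}\nabla\underline v\cdot\nabla\varphi\le\lambda\int_{B_R}g(\underline v)\varphi$ for all nonnegative $\varphi\in H^1_0(B_R(0))$ — such that $\mathrm{meas}(\{\underline v=L\})>0$. *)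

theory Defs
  imports "HOL-Analysis.Analysis"
begin

definition Hfun :: "(real \<Rightarrow> real) \<Rightarrow> real \<Rightarrow> real" where
  "Hfun h s = integral {0..s} h"

definition psi :: "(real \<Rightarrow> real) \<Rightarrow> real \<Rightarrow> real" where
  "psi h s = integral {0..s} (\<lambda>t. exp (- Hfun h t))"

definition gfun :: "(real \<Rightarrow> real) \<Rightarrow> real \<Rightarrow> real \<Rightarrow> real" where
  "gfun h \<sigma> s = (if s < psi h \<sigma>
     then exp (- Hfun h (the_inv_into {0..<\<sigma>} (psi h) s)) else 0)"

definition test_fun :: "'a::euclidean_space set \<Rightarrow> ('a \<Rightarrow> real) \<Rightarrow> ('a \<Rightarrow> 'a) \<Rightarrow> bool" where
  "test_fun \<Omega> \<phi> D\<phi> \<longleftrightarrow>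
     (\<forall>x. (\<phi> has_derivative (\<lambda>y. D\<phi> x \<bullet> y)) (at x)) \<and> continuous_on UNIV D\<phi> \<and>
     compact (closure {x. \<phi> x \<noteq> 0}) \<and> closure {x. \<phi> x \<noteq> 0} \<subseteq> \<Omega>"

definition L2_on :: "'a::euclidean_space set \<Rightarrow> ('a \<Rightarrow> real) \<Rightarrow> bool" where
  "L2_on \<Omega> u \<longleftrightarrow> set_borel_measurable lebesgue \<Omega> u \<and>
     set_integrable lebesgue \<Omega> (\<lambda>x. (u x)\<^sup>2)"

definition L2v_on :: "'a::euclidean_space set \<Rightarrow> ('a \<Rightarrow> 'a) \<Rightarrow> bool" where
  "L2v_on \<Omega> G \<longleftrightarrow> set_borel_measurable lebesgue \<Omega> G \<and>
     set_integrable lebesgue \<Omega> (\<lambda>x. (norm (G x))\<^sup>2)"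

definition weak_grad :: "'a::euclidean_space set \<Rightarrow> ('a \<Rightarrow> real) \<Rightarrow> ('a \<Rightarrow> 'a) \<Rightarrow> bool" where
  "weak_grad \<Omega> u G \<longleftrightarrow>
     (\<forall>\<phi> D\<phi>. test_fun \<Omega> \<phi> D\<phi> \<longrightarrow> (\<forall>i\<in>Basis.
        (LINT x:\<Omega>|lebesgue. u x * (D\<phi> x \<bullet> i)) = - (LINT x:\<Omega>|lebesgue. (G x \<bullet> i) * \<phi> x)))"

definition H10 :: "'a::euclidean_space set \<Rightarrow> ('a \<Rightarrow> real) \<Rightarrow> ('a \<Rightarrow> 'a) \<Rightarrow> bool" where
  "H10 \<Omega> u G \<longleftrightarrow> L2_on \<Omega> u \<and> L2v_on \<Omega> G \<and> weak_grad \<Omega> u G \<and>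
     (\<exists>\<phi> D\<phi>. (\<forall>k::nat. test_fun \<Omega> (\<phi> k) (D\<phi> k)) \<and>
        (\<lambda>k. LINT x:\<Omega>|lebesgue. (\<phi> k x - u x)\<^sup>2) \<longlonglongrightarrow> 0 \<and>
        (\<lambda>k. LINT x:\<Omega>|lebesgue. (norm (D\<phi> k x - G x))\<^sup>2) \<longlonglongrightarrow> 0)"

end

theory Submission
  imports Defs
begin

lemma has_real_derivative_zero_dominated:
  fixes f g :: "real \<Rightarrow> real"
  assumes "(g has_real_derivative 0) (at x)"
    and "eventually (\<lambda>y. \<bar>f y - f x\<bar> \<le> \<bar>g y - g x\<bar>) (at x)"
  shows "(f has_real_derivative 0) (at x)"
proof -
  have "((\<lambda>y. \<bar>(g y - g x) / (y - x)\<bar>) \<longlongrightarrow> 0) (at x)"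
    using assms(1) by (intro tendsto_rabs_zero) (simp add: has_field_derivative_iff)
  then have "((\<lambda>y. (f y - f x) / (y - x)) \<longlongrightarrow> 0) (at x)"
    by (rule Lim_null_comparison[rotated])
      (use assms(2) in \<open>eventually_elim, simp add: abs_divide divide_right_mono\<close>)
  then show ?thesis
    by (simp add: has_field_derivative_iff)
qed

lemma difference_quotient_LIMSEQ:
  fixes f :: "real \<Rightarrow> real"
  assumes "(f has_real_derivative D) (at x)"
  shows "(\<lambda>k. (f (x + inverse (Suc k)) - f x) / inverse (Suc k)) \<longlonglongrightarrow> D"
proof -
  have "((\<lambda>t. (f (x + t) - f x) / t) \<longlongrightarrow> D) (at 0)"
    using assms by (simp add: DERIV_def)
  moreover have "filterlim (\<lambda>k. inverse (real (Suc k))) (at 0) sequentially"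
    using LIMSEQ_inverse_real_of_nat by (simp add: filterlim_at)
  ultimately show ?thesis
    by (rule filterlim_compose)
qed

lemma borel_measurable_derivative:
  fixes f f' :: "real \<Rightarrow> real"
  assumes "\<And>x. (f has_real_derivative f' x) (at x)"
  shows "f' \<in> borel_measurable borel"
proof (rule borel_measurable_LIMSEQ_real)
  show "(\<lambda>k. (f (x + inverse (Suc k)) - f x) / inverse (Suc k)) \<longlonglongrightarrow> f' x" for x
    by (rule difference_quotient_LIMSEQ[OF assms])
  have cont: "continuous_on UNIV f"
    by (meson DERIV_isCont assms continuous_at_imp_continuous_on)
  have "continuous_on UNIV (\<lambda>x. f (x + c))" for c
    by (rule continuous_on_compose2[OF cont]) (auto intro: continuous_intros)
  then show "(\<lambda>x. (f (x + inverse (Suc k)) - f x) / inverse (Suc k)) \<in> borel_measurable borel" for k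
    using cont by (intro borel_measurable_continuous_onI continuous_intros) auto
qed

lemma has_real_derivative_clamp01:
  fixes f f' :: "real \<Rightarrow> real"
  assumes f: "\<And>u. (f has_real_derivative f' u) (at u)" and "f' 0 = 0" "f' 1 = 0"
  shows "((\<lambda>u. f (max 0 (min 1 u))) has_real_derivative (if 0 < u \<and> u < 1 then f' u else 0)) (at u)"
proof -
  let ?k = "\<lambda>u. f (max 0 (min 1 u))"
  have local: "(?k has_real_derivative D) (at u)"
    if "(g has_real_derivative D) (at u)" "u \<in> S" "open S" "\<And>y. y \<in> S \<Longrightarrow> g y = ?k y" for g D S
    by (rule has_field_derivative_transform_within_open[OF that(1,3,2)]) (use that(4) in simp)
  have edge: "(?k has_real_derivative 0) (at u)" if "u = 0 \<or> u = 1"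
  proof (rule has_real_derivative_zero_dominated)
    show "(f has_real_derivative 0) (at u)"
      using f[of u] that assms(2,3) by auto
    have "eventually (\<lambda>y. y \<in> {u - 1<..<u + 1}) (at u)"
      by (intro eventually_at_in_open') auto
    then show "eventually (\<lambda>y. \<bar>?k y - ?k u\<bar> \<le> \<bar>f y - f u\<bar>) (at u)"
      by eventually_elim (use that in \<open>auto simp: max_def min_def\<close>)
  qed
  consider "u < 0" | "u = 0 \<or> u = 1" | "0 < u \<and> u < 1" | "1 < u"
    by linarith
  then show ?thesis
  proof cases
    case 1
    then show ?thesis
      by (intro local[where g = "\<lambda>_. f 0" and S = "{..<0}"]) auto
  next
    case 2
    then show ?thesis
      using edge by auto
  next
    case 3
    then show ?thesis
      by (intro local[where g = f and S = "{0<..<1}"]) (auto simp: f)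
  next
    case 4
    then show ?thesis
      by (intro local[where g = "\<lambda>_. f 1" and S = "{1<..}"]) auto
  qed
qed

definition cutoff :: "nat \<Rightarrow> real \<Rightarrow> real" where
  "cutoff n u = (1 - max 0 (min 1 u) ^ n) ^ 3"

definition cutoff' :: "nat \<Rightarrow> real \<Rightarrow> real" where
  "cutoff' n u = (if 0 < u \<and> u < 1 then - 3 * real n * u ^ (n - 1) * (1 - u ^ n)\<^sup>2 else 0)"

definition cutoff'' :: "nat \<Rightarrow> real \<Rightarrow> real" where
  "cutoff'' n u = (if 0 < u \<and> u < 1
     then - 3 * real n * (real n - 1) * u ^ (n - 2) * (1 - u ^ n)\<^sup>2
          + 6 * (real n)\<^sup>2 * u ^ (2 * n - 2) * (1 - u ^ n)
     else 0)"

lemma has_real_derivative_cutoff: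
  assumes "2 \<le> n"
  shows "(cutoff n has_real_derivative cutoff' n u) (at u)"
proof -
  let ?f1 = "\<lambda>u::real. - 3 * real n * u ^ (n - 1) * (1 - u ^ n)\<^sup>2"
  have "((\<lambda>u. (1 - u ^ n) ^ 3) has_real_derivative ?f1 u) (at u)" for u :: real
    by (rule derivative_eq_intros refl)+ (simp add: power2_eq_square)
  moreover have "?f1 0 = 0" "?f1 1 = 0"
    using assms by simp_all
  ultimately have "((\<lambda>u. (1 - max 0 (min 1 u) ^ n) ^ 3) has_real_derivative
      (if 0 < u \<and> u < 1 then ?f1 u else 0)) (at u)"
    by (rule has_real_derivative_clamp01)
  then show ?thesis
    unfolding cutoff_def[abs_def] cutoff'_def .
qed

lemma has_real_derivative_cutoff':
  assumes "3 \<le> n"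
  shows "(cutoff' n has_real_derivative cutoff'' n u) (at u)"
proof -
  obtain m where n: "n = m + 3"
    using assms by (metis add.commute le_Suc_ex)
  let ?f1 = "\<lambda>u::real. - 3 * real n * u ^ (m + 2) * (1 - u ^ n)\<^sup>2"
  let ?f2 = "\<lambda>u::real. - 3 * real n * (real n - 1) * u ^ (m + 1) * (1 - u ^ n)\<^sup>2
                     + 6 * (real n)\<^sup>2 * (u ^ (m + 2) * u ^ (m + 2)) * (1 - u ^ n)"
  have "(?f1 has_real_derivative ?f2 u) (at u)" for u
    by (rule derivative_eq_intros refl)+ (simp add: n algebra_simps power2_eq_square)
  moreover have "?f2 0 = 0" "?f2 1 = 0"
    by simp_all
  ultimately have "((\<lambda>u. ?f1 (max 0 (min 1 u))) has_real_derivative (if 0 < u \<and> u < 1 then ?f2 u else 0)) (at u)"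
    by (rule has_real_derivative_clamp01)
  moreover have "cutoff' n = (\<lambda>u. ?f1 (max 0 (min 1 u)))"
    by (auto simp: fun_eq_iff cutoff'_def n max_def min_def numeral_3_eq_3)
  moreover have "cutoff'' n u = (if 0 < u \<and> u < 1 then ?f2 u else 0)"
    by (simp add: cutoff''_def n numeral_3_eq_3 power_add[symmetric] mult_2_right algebra_simps)
  ultimately show ?thesis
    by (simp only:)
qed

lemma cutoff_nonpos: "u \<le> 0 \<Longrightarrow> 0 < n \<Longrightarrow> cutoff n u = 1"
  by (simp add: cutoff_def power_0_left)

lemma cutoff_ge1: "1 \<le> u \<Longrightarrow> cutoff n u = 0"
  by (simp add: cutoff_def)

lemma cutoff_bounds: "0 \<le> cutoff n u" "cutoff n u \<le> 1"
  by (auto simp: cutoff_def power_le_one)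

lemma cutoff_strict_bounds:
  assumes "0 < u" "u < 1" "0 < n"
  shows "0 < cutoff n u" "cutoff n u < 1"
proof -
  have "0 < u ^ n" "u ^ n < 1"
    using assms by (auto simp: power_less_one_iff)
  then have "(1 - u ^ n) ^ 3 < 1 ^ 3"
    by (intro power_strict_mono) auto
  then show "0 < cutoff n u" "cutoff n u < 1"
    using assms \<open>u ^ n < 1\<close> by (auto simp: cutoff_def)
qed

lemma power_le_1_minus_cutoff:
  assumes "0 \<le> u" "u \<le> 1"
  shows "u ^ n \<le> 1 - cutoff n u"
proof -
  have "0 \<le> 1 - u ^ n" "1 - u ^ n \<le> 1"
    using assms by (auto intro: power_le_one)
  then have "(1 - u ^ n) * (1 - u ^ n)\<^sup>2 \<le> (1 - u ^ n) * 1"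
    by (intro mult_left_mono) (auto simp: power_le_one)
  then show ?thesis
    using assms by (simp add: cutoff_def power2_eq_square power3_eq_cube)
qed

lemma abs_cutoff'_le: "\<bar>cutoff' n u\<bar> \<le> 3 * real n"
proof (cases "0 < u \<and> u < 1")
  case True
  then have "0 \<le> 1 - u ^ n" "1 - u ^ n \<le> 1" "0 \<le> u ^ (n - 1)" "u ^ (n - 1) \<le> 1"
    by (auto intro: power_le_one)
  then have "u ^ (n - 1) * (1 - u ^ n)\<^sup>2 \<le> 1 * 1"
    by (intro mult_mono) (auto simp: power_le_one)
  then show ?thesis
    using True \<open>0 \<le> u ^ (n - 1)\<close> by (simp add: cutoff'_def abs_mult mult_left_le)
qed (auto simp: cutoff'_def)

lemma cutoff'_squared_le: "(cutoff' n u)\<^sup>2 \<le> 9 * (real n)\<^sup>2 * (u ^ (n - 1))\<^sup>2"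
proof (cases "0 < u \<and> u < 1")
  case True
  then have "0 \<le> 1 - u ^ n" "1 - u ^ n \<le> 1"
    by (auto intro: power_le_one)
  then have "((1 - u ^ n)\<^sup>2)\<^sup>2 \<le> 1"
    by (auto simp: power_le_one)
  then have "9 * (real n)\<^sup>2 * (u ^ (n - 1))\<^sup>2 * ((1 - u ^ n)\<^sup>2)\<^sup>2 \<le> 9 * (real n)\<^sup>2 * (u ^ (n - 1))\<^sup>2 * 1"
    by (intro mult_left_mono) auto
  moreover have "(cutoff' n u)\<^sup>2 = 9 * (real n)\<^sup>2 * (u ^ (n - 1))\<^sup>2 * ((1 - u ^ n)\<^sup>2)\<^sup>2"
    using True by (simp add: cutoff'_def power_mult_distrib)
  ultimately show ?thesis
    by simp
qed (auto simp: cutoff'_def)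

lemma abs_cutoff''_le: "\<bar>cutoff'' n u\<bar> \<le> 9 * (real n)\<^sup>2"
proof (cases "0 < u \<and> u < 1 \<and> 0 < n")
  case True
  then have a: "0 \<le> 1 - u ^ n" "1 - u ^ n \<le> 1" "u ^ (n - 2) \<le> 1" "u ^ (2 * n - 2) \<le> 1"
    and n: "0 \<le> real n - 1"
    by (auto intro: power_le_one)
  have b: "(1 - u ^ n)\<^sup>2 \<le> 1"
    using a by (auto simp: power_le_one)
  have "\<bar>cutoff'' n u\<bar> \<le> \<bar>3 * real n * (real n - 1) * (u ^ (n - 2) * (1 - u ^ n)\<^sup>2)\<bar>
      + \<bar>6 * (real n)\<^sup>2 * (u ^ (2 * n - 2) * (1 - u ^ n))\<bar>"
    using True abs_triangle_ineq[of "- (3 * real n * (real n - 1) * (u ^ (n - 2) * (1 - u ^ n)\<^sup>2))"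
        "6 * (real n)\<^sup>2 * (u ^ (2 * n - 2) * (1 - u ^ n))"]
    by (simp add: cutoff''_def mult_ac)
  also have "\<dots> = 3 * real n * (real n - 1) * (u ^ (n - 2) * (1 - u ^ n)\<^sup>2)
      + 6 * (real n)\<^sup>2 * (u ^ (2 * n - 2) * (1 - u ^ n))"
    using True a n by (simp add: abs_mult)
  also have "\<dots> \<le> 3 * real n * (real n - 1) * (1 * 1) + 6 * (real n)\<^sup>2 * (1 * 1)"
    using True a b n by (intro add_mono mult_left_mono mult_mono) auto
  also have "\<dots> = 9 * (real n)\<^sup>2 - 3 * real n"
    by (simp add: power2_eq_square algebra_simps)
  finally show ?thesis
    by simp
next
  case False
  then consider "\<not> (0 < u \<and> u < 1)" | "n = 0"
    by blast
  then show ?thesis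
  proof cases
    case 1
    then have "cutoff'' n u = 0"
      unfolding cutoff''_def by (rule if_not_P)
    then show ?thesis
      by simp
  qed (simp add: cutoff''_def)
qed

locale positive_weight =
  fixes h :: "real \<Rightarrow> real" and \<sigma> :: real
  assumes sigma_pos: "0 < \<sigma>"
    and continuous_h: "continuous_on {0..<\<sigma>} h"
    and h_pos: "\<And>s. s \<in> {0..<\<sigma>} \<Longrightarrow> 0 < h s"
begin

lemma integrable_h: "0 \<le> a \<Longrightarrow> b < \<sigma> \<Longrightarrow> h integrable_on {a..b}"
  by (intro integrable_continuous_real continuous_on_subset[OF continuous_h]) auto

lemma Hfun_mono:
  assumes "0 \<le> a" "a \<le> b" "b < \<sigma>"
  shows "Hfun h a \<le> Hfun h b"
proof -
  have "Hfun h b = Hfun h a + integral {a..b} h"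
    unfolding Hfun_def using assms integrable_h[of 0 b]
    by (simp add: Henstock_Kurzweil_Integration.integral_combine)
  moreover have "0 \<le> integral {a..b} h"
    using assms by (intro integral_nonneg integrable_h) (auto intro!: less_imp_le h_pos)
  ultimately show ?thesis
    by simp
qed

lemma Hfun_nonneg: "0 \<le> t \<Longrightarrow> t < \<sigma> \<Longrightarrow> 0 \<le> Hfun h t"
  using Hfun_mono[of 0 t] by (simp add: Hfun_def)

lemma has_real_derivative_Hfun:
  assumes "0 < t" "t < \<sigma>"
  shows "(Hfun h has_real_derivative h t) (at t)"
proof -
  have "(Hfun h has_vector_derivative h t) (at t within {0..(t + \<sigma>) / 2})"
    unfolding Hfun_def[abs_def] using assms
    by (intro integral_has_vector_derivative continuous_on_subset[OF continuous_h]) auto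
  then have "(Hfun h has_vector_derivative h t) (at t)"
    using assms by (subst (asm) at_within_interior[of t]) auto
  then show ?thesis
    by (simp add: has_real_derivative_iff_has_vector_derivative)
qed

lemma continuous_on_Hfun: "continuous_on {0..<\<sigma>} (Hfun h)"
proof (clarsimp simp: continuous_on_eq_continuous_within)
  fix t assume t: "0 \<le> t" "t < \<sigma>"
  define b where "b = (t + \<sigma>) / 2"
  have "continuous_on {0..b} (Hfun h)"
    unfolding Hfun_def[abs_def] using t
    by (intro indefinite_integral_continuous_1 integrable_h) (auto simp: b_def)
  then have "continuous (at t within {0..b}) (Hfun h)"
    using t by (auto simp: continuous_on_eq_continuous_within b_def)
  moreover have "at t within {0..<\<sigma>} = at t within {0..b}"
    using t by (intro at_within_nhd[of _ "{..<b}"]) (auto simp: b_def)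
  ultimately show "continuous (at t within {0..<\<sigma>}) (Hfun h)"
    by simp
qed

lemma exp_neg_Hfun_le_1: "0 \<le> t \<Longrightarrow> t < \<sigma> \<Longrightarrow> exp (- Hfun h t) \<le> 1"
  using Hfun_nonneg by simp

lemma exp_neg_Hfun_antimono:
  "0 \<le> a \<Longrightarrow> a \<le> b \<Longrightarrow> b < \<sigma> \<Longrightarrow> exp (- Hfun h b) \<le> exp (- Hfun h a)"
  using Hfun_mono by simp

lemma has_real_derivative_exp_neg_Hfun:
  "0 < t \<Longrightarrow> t < \<sigma> \<Longrightarrow>
    ((\<lambda>t. exp (- Hfun h t)) has_real_derivative - h t * exp (- Hfun h t)) (at t)"
  by (rule derivative_eq_intros has_real_derivative_Hfun refl | simp)+

lemma integrable_exp_neg_Hfun: "(\<lambda>t. exp (- Hfun h t)) integrable_on {0..\<sigma>}"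
proof -
  have "(\<lambda>t. exp (- Hfun h t)) integrable_on {0<..<\<sigma>}"
  proof (rule measurable_bounded_by_integrable_imp_integrable[where g = "\<lambda>_. 1"])
    show "(\<lambda>t. exp (- Hfun h t)) \<in> borel_measurable (lebesgue_on {0<..<\<sigma>})"
      by (intro continuous_imp_measurable_on_sets_lebesgue continuous_intros
          continuous_on_subset[OF continuous_on_Hfun]) auto
    show "(\<lambda>_. 1::real) integrable_on {0<..<\<sigma>}"
      by (simp add: integrable_on_open_interval_real integrable_continuous_real)
    show "norm (exp (- Hfun h t)) \<le> 1" if "t \<in> {0<..<\<sigma>}" for t
      using that exp_neg_Hfun_le_1[of t] by auto
  qed auto
  then show ?thesis
    by (simp add: integrable_on_Icc_iff_Ioo)
qed

lemma psi_0: "psi h 0 = 0"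
  by (simp add: psi_def)

lemma psi_diff:
  assumes "0 \<le> a" "a \<le> b" "b \<le> \<sigma>"
  shows "psi h b - psi h a = integral {a..b} (\<lambda>t. exp (- Hfun h t))"
  unfolding psi_def
  using Henstock_Kurzweil_Integration.integral_combine[of 0 a b "\<lambda>t. exp (- Hfun h t)"]
    integrable_subinterval_real[OF integrable_exp_neg_Hfun, of 0 b] assms
  by auto

lemma psi_increment_bounds:
  assumes "0 \<le> a" "a \<le> b" "b \<le> \<sigma>"
  shows "0 \<le> psi h b - psi h a" "psi h b - psi h a \<le> b - a"
proof -
  have int: "(\<lambda>t. exp (- Hfun h t)) integrable_on {a<..<b}"
    using integrable_subinterval_real[OF integrable_exp_neg_Hfun, of a b] assms
    by (simp add: integrable_on_Icc_iff_Ioo)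
  have eq: "psi h b - psi h a = integral {a<..<b} (\<lambda>t. exp (- Hfun h t))"
    using psi_diff[OF assms] by (simp add: integral_open_interval_real)
  show "0 \<le> psi h b - psi h a"
    unfolding eq by (rule integral_nonneg[OF int]) simp
  have "integral {a<..<b} (\<lambda>t. exp (- Hfun h t)) \<le> integral {a<..<b} (\<lambda>_. 1)"
    using assms exp_neg_Hfun_le_1
    by (intro integral_le[OF int]) (auto simp: integrable_on_open_interval_real integrable_continuous_real)
  also have "\<dots> = b - a"
    using assms by (simp add: integral_open_interval_real[symmetric])
  finally show "psi h b - psi h a \<le> b - a"
    unfolding eq .
qed

lemma psi_strict_mono: "strict_mono_on {0..\<sigma>} (psi h)"
proof (rule strict_mono_onI)
  fix a b assume ab: "a \<in> {0..\<sigma>}" "b \<in> {0..\<sigma>}" "a < b"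
  define c where "c = (a + b) / 2"
  have c: "a < c" "c < b"
    using ab by (auto simp: c_def)
  have "(c - a) * exp (- Hfun h c) = integral {a..c} (\<lambda>_. exp (- Hfun h c))"
    using c by simp
  also have "\<dots> \<le> integral {a..c} (\<lambda>t. exp (- Hfun h t))"
    using ab c
    by (intro integral_le integrable_continuous_real continuous_intros
        continuous_on_subset[OF continuous_on_Hfun] exp_neg_Hfun_antimono) auto
  also have "\<dots> = psi h c - psi h a"
    using ab c by (simp add: psi_diff)
  finally have "(c - a) * exp (- Hfun h c) \<le> psi h c - psi h a" .
  moreover have "0 < (c - a) * exp (- Hfun h c)"
    using c by simp
  moreover have "psi h c \<le> psi h b"
    using psi_increment_bounds(1)[of c b] ab c by auto
  ultimately show "psi h a < psi h b"
    by linarith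
qed

lemma has_real_derivative_psi:
  assumes "0 < t" "t < \<sigma>"
  shows "(psi h has_real_derivative exp (- Hfun h t)) (at t)"
proof -
  have "(psi h has_vector_derivative exp (- Hfun h t)) (at t within {0..(t + \<sigma>) / 2})"
    unfolding psi_def[abs_def] using assms
    by (intro integral_has_vector_derivative continuous_intros
        continuous_on_subset[OF continuous_on_Hfun]) auto
  then have "(psi h has_vector_derivative exp (- Hfun h t)) (at t)"
    using assms by (subst (asm) at_within_interior[of t]) auto
  then show ?thesis
    by (simp add: has_real_derivative_iff_has_vector_derivative)
qed

text \<open>The nonlinearity \<open>g\<close> is read off along \<open>psi\<close>: this avoids inverting \<open>psi\<close> anywhere else.\<close>
lemma gfun_psi: "gfun h \<sigma> (psi h t) = (if t \<in> {0..<\<sigma>} then exp (- Hfun h t) else 0)"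
  if "t \<in> {0..\<sigma>}"
proof (cases "t < \<sigma>")
  case True
  have inj: "inj_on (psi h) {0..<\<sigma>}"
    by (rule strict_mono_on_imp_inj_on[OF monotone_on_subset[OF psi_strict_mono]]) auto
  have "psi h t < psi h \<sigma>"
    using psi_strict_mono that True sigma_pos by (auto simp: strict_mono_on_def)
  moreover have "the_inv_into {0..<\<sigma>} (psi h) (psi h t) = t"
    using that True by (intro the_inv_into_f_f[OF inj]) auto
  ultimately show ?thesis
    using that True by (simp add: gfun_def)
next
  case False
  then have "t = \<sigma>"
    using that by auto
  then show ?thesis
    by (simp add: gfun_def)
qed

end

context positive_weight
begin

lemma psi_lipschitz:
  assumes "s \<in> {0..\<sigma>}" "t \<in> {0..\<sigma>}"
  shows "\<bar>psi h s - psi h t\<bar> \<le> \<bar>s - t\<bar>"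
  using assms psi_increment_bounds[of s t] psi_increment_bounds[of t s] by (cases "s \<le> t") auto

end

locale radial_profile = positive_weight +
  fixes n :: nat and a d :: real
  assumes n_ge_3: "3 \<le> n" and d_pos: "0 < d"
begin

definition "w s = \<sigma> * cutoff n ((s - a) / d)"
definition "w' s = \<sigma> / d * cutoff' n ((s - a) / d)"
definition "w'' s = \<sigma> / d\<^sup>2 * cutoff'' n ((s - a) / d)"

definition "F s = psi h (w s)"
definition "F' s = exp (- Hfun h (w s)) * w' s"
definition "F'' s = (if a < s \<and> s < a + d
   then exp (- Hfun h (w s)) * (w'' s - h (w s) * (w' s)\<^sup>2) else 0)"

lemma transition_iff: "0 < (s - a) / d \<and> (s - a) / d < 1 \<longleftrightarrow> a < s \<and> s < a + d"
  using d_pos by (auto simp: field_simps)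

lemma w_bounds: "0 \<le> w s" "w s \<le> \<sigma>"
  using cutoff_bounds[of n "(s - a) / d"] sigma_pos by (auto simp: w_def mult_le_cancel_left1)

lemma w_strict_bounds:
  assumes "a < s" "s < a + d"
  shows "0 < w s" "w s < \<sigma>"
  using cutoff_strict_bounds[of "(s - a) / d" n] assms transition_iff n_ge_3 sigma_pos
  by (auto simp: w_def)

lemma w_inner: "s \<le> a \<Longrightarrow> w s = \<sigma>"
  using d_pos n_ge_3 by (simp add: w_def cutoff_nonpos divide_le_0_iff)

lemma w_outer: "a + d \<le> s \<Longrightarrow> w s = 0"
  using d_pos by (simp add: w_def cutoff_ge1 field_simps)

lemma w'_outside: "\<not> (a < s \<and> s < a + d) \<Longrightarrow> w' s = 0"
  using transition_iff by (auto simp: w'_def cutoff'_def)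

lemma w''_outside: "\<not> (a < s \<and> s < a + d) \<Longrightarrow> w'' s = 0"
  using transition_iff by (auto simp: w''_def cutoff''_def)

lemma F'_outside: "\<not> (a < s \<and> s < a + d) \<Longrightarrow> F' s = 0"
  by (simp add: F'_def w'_outside)

lemma F''_outside: "\<not> (a < s \<and> s < a + d) \<Longrightarrow> F'' s = 0"
  unfolding F''_def by (rule if_not_P)

lemma has_real_derivative_rescale: "((\<lambda>s. (s - a) / d) has_real_derivative 1 / d) (at s)"
  using DERIV_cdivide[OF DERIV_diff[OF DERIV_ident DERIV_const], where c = d] by simp

lemma has_real_derivative_w: "(w has_real_derivative w' s) (at s)"
proof -
  have "((\<lambda>s. cutoff n ((s - a) / d)) has_real_derivative cutoff' n ((s - a) / d) * (1 / d)) (at s)"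
    using n_ge_3 by (intro DERIV_chain2[OF has_real_derivative_cutoff has_real_derivative_rescale]) simp
  from DERIV_cmult[OF this, of \<sigma>] show ?thesis
    unfolding w_def[abs_def] by (rule DERIV_cong) (simp add: w'_def)
qed

lemma has_real_derivative_w': "(w' has_real_derivative w'' s) (at s)"
proof -
  have "((\<lambda>s. cutoff' n ((s - a) / d)) has_real_derivative cutoff'' n ((s - a) / d) * (1 / d)) (at s)"
    using n_ge_3 by (intro DERIV_chain2[OF has_real_derivative_cutoff' has_real_derivative_rescale]) simp
  from DERIV_cmult[OF this, of "\<sigma> / d"] show ?thesis
    unfolding w'_def[abs_def] by (rule DERIV_cong) (simp add: w''_def power2_eq_square)
qed

lemma continuous_on_w: "continuous_on UNIV w"
  by (intro continuous_at_imp_continuous_on ballI DERIV_isCont[OF has_real_derivative_w])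

lemma has_real_derivative_F: "(F has_real_derivative F' s) (at s)"
proof (cases "a < s \<and> s < a + d")
  case True
  then show ?thesis
    unfolding F_def[abs_def] F'_def
    using w_strict_bounds by (intro DERIV_chain2[OF has_real_derivative_psi has_real_derivative_w]) auto
next
  case False
  have "(F has_real_derivative 0) (at s)"
  proof (rule has_real_derivative_zero_dominated)
    show "(w has_real_derivative 0) (at s)"
      using has_real_derivative_w[of s] w'_outside[OF False] by simp
    have "\<bar>F y - F s\<bar> \<le> \<bar>w y - w s\<bar>" for y
      unfolding F_def by (rule psi_lipschitz) (use w_bounds in auto)
    then show "\<forall>\<^sub>F y in at s. \<bar>F y - F s\<bar> \<le> \<bar>w y - w s\<bar>"
      by (intro always_eventually allI)
  qed
  then show ?thesis
    using F'_outside[OF False] by simp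
qed

lemma has_real_derivative_F': "(F' has_real_derivative F'' s) (at s)"
proof (cases "a < s \<and> s < a + d")
  case True
  have "((\<lambda>s. exp (- Hfun h (w s))) has_real_derivative (- h (w s) * exp (- Hfun h (w s))) * w' s) (at s)"
    using True w_strict_bounds
    by (intro DERIV_chain2[OF has_real_derivative_exp_neg_Hfun has_real_derivative_w]) auto
  from DERIV_mult[OF this has_real_derivative_w'[of s]] show ?thesis
    using True unfolding F'_def[abs_def] F''_def by (simp add: power2_eq_square algebra_simps)
next
  case False
  have "(F' has_real_derivative 0) (at s)"
  proof (rule has_real_derivative_zero_dominated)
    show "(w' has_real_derivative 0) (at s)"
      using has_real_derivative_w'[of s] w''_outside[OF False] by simp
    have "\<bar>F' y\<bar> \<le> \<bar>w' y\<bar>" for y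
    proof (cases "a < y \<and> y < a + d")
      case True
      then have "exp (- Hfun h (w y)) \<le> 1"
        using w_strict_bounds[of y] by (intro exp_neg_Hfun_le_1) auto
      then show ?thesis
        by (simp add: F'_def abs_mult mult_left_le_one_le)
    next
      case False
      then show ?thesis
        using F'_outside[OF False] w'_outside[OF False] by simp
    qed
    then show "\<forall>\<^sub>F y in at s. \<bar>F' y - F' s\<bar> \<le> \<bar>w' y - w' s\<bar>"
      using False by (simp add: F'_outside w'_outside)
  qed
  then show ?thesis
    using F''_outside[OF False] by simp
qed

lemma continuous_on_F: "continuous_on UNIV F"
  by (intro continuous_at_imp_continuous_on ballI DERIV_isCont[OF has_real_derivative_F])

lemma continuous_on_F': "continuous_on UNIV F'"
  by (intro continuous_at_imp_continuous_on ballI DERIV_isCont[OF has_real_derivative_F'])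

lemma borel_measurable_F'': "F'' \<in> borel_measurable borel"
  by (rule borel_measurable_derivative[OF has_real_derivative_F'])

end

locale radial_profile_bounds = radial_profile +
  fixes \<gamma> M :: real
  assumes gamma_nonneg: "0 \<le> \<gamma>"
    and blowup_le: "\<And>t. t \<in> {0..<\<sigma>} \<Longrightarrow> (\<sigma> - t) powr \<gamma> * h t \<le> M"
    and n_gamma_le: "real n * \<gamma> \<le> 2 * real n - 2"
begin

definition "slope_bound = \<sigma> / d * (3 * real n)"
definition "bend_bound = \<sigma> / d\<^sup>2 * (9 * (real n)\<^sup>2)"
definition "singular_bound = 9 * (real n)\<^sup>2 * \<sigma>\<^sup>2 * M / (d\<^sup>2 * \<sigma> powr \<gamma>)"

lemma M_nonneg: "0 \<le> M"
proof -
  have "0 \<le> (\<sigma> - 0) powr \<gamma> * h 0"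
    using h_pos[of 0] sigma_pos by simp
  then show ?thesis
    using blowup_le[of 0] sigma_pos by simp
qed

lemma bounds_nonneg: "0 \<le> slope_bound" "0 \<le> bend_bound" "0 \<le> singular_bound"
  using sigma_pos d_pos M_nonneg by (auto simp: slope_bound_def bend_bound_def singular_bound_def)

lemma abs_w'_le: "\<bar>w' s\<bar> \<le> slope_bound"
proof -
  have "\<bar>w' s\<bar> = \<sigma> / d * \<bar>cutoff' n ((s - a) / d)\<bar>"
    using sigma_pos d_pos by (simp add: w'_def abs_mult)
  also have "\<dots> \<le> \<sigma> / d * (3 * real n)"
    using abs_cutoff'_le sigma_pos d_pos by (intro mult_left_mono) auto
  finally show ?thesis
    unfolding slope_bound_def .
qed

lemma abs_w''_le: "\<bar>w'' s\<bar> \<le> bend_bound"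
proof -
  have "\<bar>w'' s\<bar> = \<sigma> / d\<^sup>2 * \<bar>cutoff'' n ((s - a) / d)\<bar>"
    using sigma_pos d_pos by (simp add: w''_def abs_mult)
  also have "\<dots> \<le> \<sigma> / d\<^sup>2 * (9 * (real n)\<^sup>2)"
    using abs_cutoff''_le sigma_pos d_pos by (intro mult_left_mono) auto
  finally show ?thesis
    unfolding bend_bound_def .
qed

text \<open>Near the plateau \<open>w s\<close> approaches \<open>\<sigma>\<close> like \<open>\<sigma> u\<^sup>n\<close> with \<open>u = (s - a) / d\<close>, so
  \<open>h (w s) \<le> M (\<sigma> u\<^sup>n) powr - \<gamma>\<close>, while \<open>(w' s)\<^sup>2 = O(u\<^sup>2\<^sup>n\<^sup>-\<^sup>2)\<close>;
  the choice \<open>n \<gamma> \<le> 2 n - 2\<close> makes the product bounded.\<close>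
lemma h_w_w'_squared_le:
  assumes "a < s" "s < a + d"
  shows "h (w s) * (w' s)\<^sup>2 \<le> singular_bound"
proof -
  define u where "u = (s - a) / d"
  have u: "0 < u" "u < 1"
    using assms transition_iff by (auto simp: u_def)
  have ws: "0 < w s" "w s < \<sigma>"
    using w_strict_bounds[OF assms] by auto
  have "\<sigma> * u ^ n \<le> \<sigma> * (1 - cutoff n u)"
    using power_le_1_minus_cutoff[of u n] u sigma_pos by (intro mult_left_mono) auto
  then have gap: "\<sigma> * u ^ n \<le> \<sigma> - w s"
    by (simp add: w_def u_def algebra_simps)
  define B where "B = \<sigma> powr \<gamma> * u powr (real n * \<gamma>)"
  have B: "B = (\<sigma> * u ^ n) powr \<gamma>"
    using u sigma_pos by (simp add: B_def powr_mult powr_powr powr_realpow[symmetric] mult.commute)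
  have h0: "0 \<le> h (w s)"
    using h_pos[of "w s"] ws by auto
  have "h (w s) * B \<le> h (w s) * (\<sigma> - w s) powr \<gamma>"
    unfolding B using gap u sigma_pos gamma_nonneg h0 by (intro mult_left_mono powr_mono2) auto
  also have "\<dots> \<le> M"
    using blowup_le[of "w s"] ws by (simp add: mult.commute)
  finally have hB: "h (w s) * B \<le> M" .
  have "(u ^ (n - 1))\<^sup>2 = u ^ (2 * n - 2)"
    unfolding power_mult[symmetric] by (rule arg_cong[where f = "(^) u"]) presburger
  also have "\<dots> = u powr real (2 * n - 2)"
    using u(1) by (rule powr_realpow[symmetric])
  also have "real (2 * n - 2) = 2 * real n - 2"
    using n_ge_3 by (simp add: of_nat_diff)
  also have "u powr (2 * real n - 2) \<le> u powr (real n * \<gamma>)"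
    using u n_gamma_le by (intro powr_mono') auto
  finally have u_power: "(u ^ (n - 1))\<^sup>2 \<le> u powr (real n * \<gamma>)" .
  have "(w' s)\<^sup>2 = \<sigma>\<^sup>2 / d\<^sup>2 * (cutoff' n u)\<^sup>2"
    by (simp add: w'_def u_def power_divide power_mult_distrib)
  also have "\<dots> \<le> \<sigma>\<^sup>2 / d\<^sup>2 * (9 * (real n)\<^sup>2 * (u ^ (n - 1))\<^sup>2)"
    using cutoff'_squared_le[of n u] by (intro mult_left_mono) auto
  also have "\<dots> \<le> \<sigma>\<^sup>2 / d\<^sup>2 * (9 * (real n)\<^sup>2 * u powr (real n * \<gamma>))"
    using u_power by (intro mult_left_mono) auto
  finally have w'_sq: "(w' s)\<^sup>2 \<le> \<sigma>\<^sup>2 / d\<^sup>2 * (9 * (real n)\<^sup>2 * u powr (real n * \<gamma>))" .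
  have "h (w s) * (w' s)\<^sup>2 \<le> h (w s) * (\<sigma>\<^sup>2 / d\<^sup>2 * (9 * (real n)\<^sup>2 * u powr (real n * \<gamma>)))"
    using w'_sq h0 by (rule mult_left_mono)
  also have "\<dots> = (h (w s) * B) * (9 * (real n)\<^sup>2 * \<sigma>\<^sup>2 / (d\<^sup>2 * \<sigma> powr \<gamma>))"
    using sigma_pos by (simp add: B_def field_simps)
  also have "\<dots> \<le> M * (9 * (real n)\<^sup>2 * \<sigma>\<^sup>2 / (d\<^sup>2 * \<sigma> powr \<gamma>))"
    using hB sigma_pos d_pos by (intro mult_right_mono) auto
  finally show ?thesis
    by (simp add: singular_bound_def mult_ac)
qed

lemma abs_F'_le: "\<bar>F' s\<bar> \<le> slope_bound"
proof (cases "a < s \<and> s < a + d")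
  case True
  then have "exp (- Hfun h (w s)) \<le> 1"
    using w_strict_bounds[of s] by (intro exp_neg_Hfun_le_1) auto
  then have "\<bar>F' s\<bar> \<le> \<bar>w' s\<bar>"
    by (simp add: F'_def abs_mult mult_left_le_one_le)
  then show ?thesis
    using abs_w'_le[of s] by linarith
next
  case False
  then show ?thesis
    using F'_outside[OF False] bounds_nonneg by simp
qed

lemma abs_F''_le: "\<bar>F'' s\<bar> \<le> bend_bound + singular_bound"
proof (cases "a < s \<and> s < a + d")
  case True
  have E: "exp (- Hfun h (w s)) \<le> 1"
    using True w_strict_bounds[of s] by (intro exp_neg_Hfun_le_1) auto
  have "0 \<le> h (w s) * (w' s)\<^sup>2"
    using h_pos[of "w s"] w_strict_bounds[of s] True by auto
  then have "\<bar>w'' s - h (w s) * (w' s)\<^sup>2\<bar> \<le> bend_bound + singular_bound"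
    using abs_w''_le[of s] h_w_w'_squared_le[of s] True by linarith
  moreover have "\<bar>F'' s\<bar> \<le> \<bar>w'' s - h (w s) * (w' s)\<^sup>2\<bar>"
    using True E by (simp add: F''_def abs_mult mult_left_le_one_le)
  ultimately show ?thesis
    by linarith
next
  case False
  then show ?thesis
    using F''_outside[OF False] bounds_nonneg by simp
qed

text \<open>In dimension \<open>N\<close> the Laplacian of \<open>x \<mapsto> F (x \<bullet> x)\<close> is \<open>2 N F' + 4 s F''\<close> at \<open>s = x \<bullet> x\<close>,
  and on the transition layer each of its terms carries the factor \<open>exp (- Hfun h (w s))\<close>.\<close>
lemma neg_radial_laplacian_le:
  assumes "a < s" "s < a + d" "0 \<le> s" "s \<le> S" "0 \<le> N"
  shows "- (2 * N * F' s + 4 * s * F'' s)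
    \<le> (2 * N * slope_bound + 4 * S * bend_bound + 4 * S * singular_bound) * exp (- Hfun h (w s))"
proof -
  have split: "- (2 * N * F' s + 4 * s * F'' s) = exp (- Hfun h (w s))
      * (2 * N * (- w' s) + 4 * s * (- w'' s) + 4 * s * (h (w s) * (w' s)\<^sup>2))"
    using assms by (simp add: F'_def F''_def algebra_simps)
  have "2 * N * (- w' s) \<le> 2 * N * slope_bound"
    using abs_w'_le[of s] assms by (intro mult_left_mono) auto
  moreover have "4 * s * (- w'' s) \<le> 4 * S * bend_bound"
  proof -
    have "4 * s * (- w'' s) \<le> 4 * s * bend_bound"
      using abs_w''_le[of s] assms by (intro mult_left_mono) auto
    also have "\<dots> \<le> 4 * S * bend_bound"
      using bounds_nonneg assms by (intro mult_right_mono) auto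
    finally show ?thesis .
  qed
  moreover have "4 * s * (h (w s) * (w' s)\<^sup>2) \<le> 4 * S * singular_bound"
  proof (rule mult_mono)
    show "0 \<le> h (w s) * (w' s)\<^sup>2"
      using h_pos[of "w s"] w_strict_bounds[OF assms(1,2)] by simp
  qed (use h_w_w'_squared_le[OF assms(1,2)] assms in auto)
  ultimately have "2 * N * (- w' s) + 4 * s * (- w'' s) + 4 * s * (h (w s) * (w' s)\<^sup>2)
      \<le> 2 * N * slope_bound + 4 * S * bend_bound + 4 * S * singular_bound"
    by linarith
  then show ?thesis
    unfolding split by (simp add: mult.commute)
qed

end

lemma bounded_mult_comp:
  fixes f g :: "'a \<Rightarrow> real"
  assumes "bounded (f ` S)" "bounded (g ` S)"
  shows "bounded ((\<lambda>x. f x * g x) ` S)"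
proof -
  obtain B C where "\<And>x. x \<in> S \<Longrightarrow> \<bar>f x\<bar> \<le> B" "\<And>x. x \<in> S \<Longrightarrow> \<bar>g x\<bar> \<le> C"
    using assms by (auto simp: bounded_iff)
  then have "\<And>x. x \<in> S \<Longrightarrow> \<bar>f x * g x\<bar> \<le> B * C"
    unfolding abs_mult by (intro mult_mono') auto
  then show ?thesis
    unfolding bounded_iff by (intro exI[of _ "B * C"]) auto
qed

lemma bounded_cball_image_continuous:
  fixes f :: "'a::euclidean_space \<Rightarrow> 'b::real_normed_vector"
  assumes "continuous_on UNIV f"
  shows "bounded (f ` cball 0 r)"
proof -
  have "continuous_on (cball 0 r) f"
    using assms by (rule continuous_on_subset) simp
  then show ?thesis
    by (intro compact_imp_bounded compact_continuous_image compact_cball)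
qed

lemma has_real_derivative_along_line:
  fixes f :: "'a::real_normed_vector \<Rightarrow> real"
  assumes "(f has_derivative f') (at x)"
  shows "((\<lambda>t. f (x + t *\<^sub>R e)) has_real_derivative f' e) (at 0)"
proof -
  have "((\<lambda>t::real. x + t *\<^sub>R e) has_derivative (\<lambda>t. t *\<^sub>R e)) (at 0)"
    by (auto intro!: derivative_eq_intros)
  then have "((\<lambda>t. f (x + t *\<^sub>R e)) has_derivative (\<lambda>t. f' (t *\<^sub>R e))) (at 0)"
    using has_derivative_compose[of "\<lambda>t. x + t *\<^sub>R e" _ 0 UNIV f f'] assms by simp
  moreover have "(\<lambda>t. f' (t *\<^sub>R e)) = (*) (f' e)"
    using has_derivative_bounded_linear[OF assms] by (auto simp: fun_eq_iff linear_simps)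
  ultimately show ?thesis
    by (simp add: has_field_derivative_def)
qed

lemma integrable_lborel_bounded_support:
  fixes f :: "'a::euclidean_space \<Rightarrow> real"
  assumes "f \<in> borel_measurable borel" "bounded (f ` cball 0 r)" "\<And>x. r < norm x \<Longrightarrow> f x = 0"
  shows "integrable lborel f"
proof -
  obtain B where "\<forall>y \<in> f ` cball 0 r. norm y \<le> B"
    using assms(2) bounded_iff by blast
  then have B: "\<And>x. x \<in> cball 0 r \<Longrightarrow> \<bar>f x\<bar> \<le> B"
    by (metis image_eqI real_norm_def)
  have bound: "norm (f x) \<le> norm (B * indicator (cball (0::'a) r) x)" for x
  proof (cases "x \<in> cball 0 r")
    case True
    then show ?thesis
      using B[OF True] by simp
  next
    case False
    then show ?thesis
      using assms(3)[of x] by simp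
  qed
  show ?thesis
  proof (rule Bochner_Integration.integrable_bound)
    show "integrable lborel (\<lambda>x. B * indicator (cball (0::'a) r) x)"
      by (intro integrable_mult_right integrable_real_indicator emeasure_lborel_cball_finite) auto
    show "f \<in> borel_measurable lborel"
      using assms(1) by simp
    show "AE x in lborel. norm (f x) \<le> norm (B * indicator (cball 0 r) x)"
      using bound by (intro AE_I2)
  qed
qed

lemma lborel_integral_translate:
  fixes G :: "'a::euclidean_space \<Rightarrow> real"
  assumes "G \<in> borel_measurable borel" "integrable lborel G"
  shows "integrable lborel (\<lambda>x. G (x + c))" "integral\<^sup>L lborel (\<lambda>x. G (x + c)) = integral\<^sup>L lborel G"
proof -
  have "integrable (distr lborel borel ((+) c)) G"
    using assms by (simp add: lborel_distr_plus)
  then show "integrable lborel (\<lambda>x. G (x + c))"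
    using assms by (subst (asm) integrable_distr_eq) (auto simp: add.commute)
  have "integral\<^sup>L lborel G = integral\<^sup>L (distr lborel borel ((+) c)) G"
    by (simp add: lborel_distr_plus)
  also have "\<dots> = integral\<^sup>L lborel (\<lambda>x. G (x + c))"
    using assms by (subst integral_distr) (auto simp: add.commute)
  finally show "integral\<^sup>L lborel (\<lambda>x. G (x + c)) = integral\<^sup>L lborel G"
    by simp
qed

text \<open>The difference quotients along \<open>e\<close> integrate to zero by translation invariance, and they
  converge to the directional derivative with a compactly supported bound (mean value theorem).\<close>
lemma lborel_integral_directional_derivative_eq_0:
  fixes G DG :: "'a::euclidean_space \<Rightarrow> real"
  assumes cont: "continuous_on UNIV G"
    and deriv: "\<And>x. ((\<lambda>t. G (x + t *\<^sub>R e)) has_real_derivative DG x) (at 0)"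
    and meas: "DG \<in> borel_measurable borel"
    and bdd: "\<And>\<rho>. bounded (DG ` cball 0 \<rho>)"
    and supp: "\<And>x. r < norm x \<Longrightarrow> G x = 0"
  shows "integrable lborel DG" "integral\<^sup>L lborel DG = 0"
proof -
  have G_meas: "G \<in> borel_measurable borel"
    using cont by (rule borel_measurable_continuous_onI)
  have G_int: "integrable lborel G"
    using G_meas supp by (intro integrable_lborel_bounded_support bounded_cball_image_continuous cont)
  define t :: "nat \<Rightarrow> real" where "t k = inverse (Suc k)" for k
  have t: "0 < t k" "t k \<le> 1" for k
    by (auto simp: t_def field_simps)
  define q where "q k x = (G (x + t k *\<^sub>R e) - G x) / t k" for k x
  have deriv_at: "((\<lambda>s. G (x + s *\<^sub>R e)) has_real_derivative DG (x + \<tau> *\<^sub>R e)) (at \<tau>)" for x \<tau>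
    using DERIV_shift[of "\<lambda>s. G (x + s *\<^sub>R e)" "DG (x + \<tau> *\<^sub>R e)" 0 \<tau>] deriv[of "x + \<tau> *\<^sub>R e"]
    by (simp add: scaleR_add_left add_ac)
  obtain B where B: "0 < B" "\<And>y. norm y \<le> r + 2 * norm e \<Longrightarrow> \<bar>DG y\<bar> \<le> B"
    using bdd[of "r + 2 * norm e"] by (auto simp: bounded_pos)
  define bound where "bound x = B * indicator (cball (0::'a) (r + norm e)) x" for x
  have q_bound: "\<bar>q k x\<bar> \<le> bound x" for k x
  proof (cases "norm x \<le> r + norm e")
    case True
    obtain z where z: "0 < z" "z < t k" "G (x + t k *\<^sub>R e) - G (x + 0 *\<^sub>R e) = (t k - 0) * DG (x + z *\<^sub>R e)"
      using MVT2[of 0 "t k" "\<lambda>s. G (x + s *\<^sub>R e)" "\<lambda>s. DG (x + s *\<^sub>R e)"] t[of k] deriv_at by blast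
    have "norm (x + z *\<^sub>R e) \<le> norm x + z * norm e"
      using z by (simp add: norm_triangle_le)
    also have "\<dots> \<le> r + 2 * norm e"
      using True z t[of k] mult_right_mono[of z 1 "norm e"] by auto
    finally show ?thesis
      using B(2) z t[of k] True by (simp add: q_def bound_def)
  next
    case False
    have "norm x \<le> norm (x + t k *\<^sub>R e) + t k * norm e"
      using norm_triangle_ineq4[of "x + t k *\<^sub>R e" "t k *\<^sub>R e"] t[of k] by simp
    moreover have "t k * norm e \<le> norm e"
      using t[of k] mult_right_mono[of "t k" 1 "norm e"] by auto
    ultimately have "r < norm (x + t k *\<^sub>R e)" "r < norm x"
      using False norm_ge_zero[of e] by linarith+
    then show ?thesis
      using False supp[of x] supp[of "x + t k *\<^sub>R e"] B t[of k] by (simp add: q_def bound_def)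
  qed
  have bound_int: "integrable lborel bound"
    unfolding bound_def by (intro integrable_mult_right integrable_real_indicator emeasure_lborel_cball_finite) auto
  have q_lim: "(\<lambda>k. q k x) \<longlonglongrightarrow> DG x" for x
    using difference_quotient_LIMSEQ[OF deriv[of x]] by (simp add: q_def t_def)
  have q_meas: "q k \<in> borel_measurable borel" for k
    unfolding q_def using t[of k]
    by (intro borel_measurable_continuous_onI continuous_intros continuous_on_compose2[OF cont]) auto
  have q_int: "integral\<^sup>L lborel (q k) = 0" for k
  proof -
    note shifted = lborel_integral_translate[OF G_meas G_int, of "t k *\<^sub>R e"]
    have "q k = (\<lambda>x. (G (x + t k *\<^sub>R e) - G x) / t k)"
      by (simp add: fun_eq_iff q_def)
    then have "integral\<^sup>L lborel (q k)
        = (integral\<^sup>L lborel (\<lambda>x. G (x + t k *\<^sub>R e)) - integral\<^sup>L lborel G) / t k"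
      by (simp only: integral_divide_zero Bochner_Integration.integral_diff[OF shifted(1) G_int])
    then show ?thesis
      by (simp only: shifted(2) diff_self div_0)
  qed
  have meas_lborel: "DG \<in> borel_measurable lborel" "\<And>k. q k \<in> borel_measurable lborel"
    using meas q_meas by simp_all
  note dominated = meas_lborel bound_int AE_I2[OF q_lim] AE_I2[OF q_bound[simplified real_norm_def[symmetric]]]
  show "integrable lborel DG"
    by (rule integrable_dominated_convergence[OF dominated])
  have "(\<lambda>k. integral\<^sup>L lborel (q k)) \<longlonglongrightarrow> integral\<^sup>L lborel DG"
    by (rule integral_dominated_convergence[OF dominated])
  then show "integral\<^sup>L lborel DG = 0"
    by (simp add: q_int LIMSEQ_const_iff)
qed

lemma lborel_integral_by_parts:
  fixes u du \<phi> d\<phi> :: "'a::euclidean_space \<Rightarrow> real"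
  assumes u: "continuous_on UNIV u" "\<And>x. ((\<lambda>t. u (x + t *\<^sub>R e)) has_real_derivative du x) (at 0)"
      "du \<in> borel_measurable borel" "\<And>\<rho>. bounded (du ` cball 0 \<rho>)"
    and \<phi>: "continuous_on UNIV \<phi>" "\<And>x. ((\<lambda>t. \<phi> (x + t *\<^sub>R e)) has_real_derivative d\<phi> x) (at 0)"
      "continuous_on UNIV d\<phi>" "\<And>x. r < norm x \<Longrightarrow> \<phi> x = 0 \<and> d\<phi> x = 0"
  shows "integral\<^sup>L lborel (\<lambda>x. u x * d\<phi> x) = - integral\<^sup>L lborel (\<lambda>x. du x * \<phi> x)"
proof -
  have meas: "(\<lambda>x. u x * d\<phi> x) \<in> borel_measurable borel" "(\<lambda>x. du x * \<phi> x) \<in> borel_measurable borel"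
  proof -
    have "u \<in> borel_measurable borel" "\<phi> \<in> borel_measurable borel" "d\<phi> \<in> borel_measurable borel"
      using u(1) \<phi>(1,3) by (auto intro: borel_measurable_continuous_onI)
    then show "(\<lambda>x. u x * d\<phi> x) \<in> borel_measurable borel" "(\<lambda>x. du x * \<phi> x) \<in> borel_measurable borel"
      using u(3) by (auto intro: borel_measurable_times)
  qed
  have bdd: "bounded ((\<lambda>x. u x * d\<phi> x) ` cball 0 \<rho>)" "bounded ((\<lambda>x. du x * \<phi> x) ` cball 0 \<rho>)" for \<rho>
    using u(1,4) \<phi>(1,3) by (simp_all add: bounded_mult_comp bounded_cball_image_continuous)
  have "integrable lborel (\<lambda>x. u x * d\<phi> x)"
    by (rule integrable_lborel_bounded_support[OF meas(1) bdd(1)[of r]]) (simp add: \<phi>(4))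
  moreover have "integrable lborel (\<lambda>x. du x * \<phi> x)"
    by (rule integrable_lborel_bounded_support[OF meas(2) bdd(2)[of r]]) (simp add: \<phi>(4))
  moreover have "integral\<^sup>L lborel (\<lambda>x. du x * \<phi> x + u x * d\<phi> x) = 0"
  proof (rule lborel_integral_directional_derivative_eq_0(2))
    show "continuous_on UNIV (\<lambda>x. u x * \<phi> x)"
      using u(1) \<phi>(1) by (rule continuous_on_mult)
    show "((\<lambda>t. u (x + t *\<^sub>R e) * \<phi> (x + t *\<^sub>R e)) has_real_derivative du x * \<phi> x + u x * d\<phi> x) (at 0)" for x
      using DERIV_mult[OF u(2) \<phi>(2), of x] by (simp add: ac_simps)
    show "(\<lambda>x. du x * \<phi> x + u x * d\<phi> x) \<in> borel_measurable borel"
      using meas by simp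
    show "bounded ((\<lambda>x. du x * \<phi> x + u x * d\<phi> x) ` cball 0 \<rho>)" for \<rho>
      using bdd by (intro bounded_plus_comp)
    show "u x * \<phi> x = 0" if "r < norm x" for x
      using \<phi>(4)[OF that] by simp
  qed
  ultimately show ?thesis
    by simp
qed

lemma set_lebesgue_integral_eq_lborel:
  fixes f :: "'a::euclidean_space \<Rightarrow> real"
  assumes "f \<in> borel_measurable borel" "\<And>x. x \<notin> S \<Longrightarrow> f x = 0"
  shows "(LINT x:S|lebesgue. f x) = integral\<^sup>L lborel f"
proof -
  have "(\<lambda>x. indicator S x *\<^sub>R f x) = f"
    using assms(2) by (auto simp: fun_eq_iff indicator_def)
  then have "(LINT x:S|lebesgue. f x) = integral\<^sup>L lebesgue f"
    by (simp add: set_lebesgue_integral_def)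
  also have "\<dots> = integral\<^sup>L lborel f"
    using assms(1) by (intro integral_completion) simp
  finally show ?thesis .
qed

lemma set_borel_measurable_continuous:
  fixes f :: "'a::euclidean_space \<Rightarrow> 'b::euclidean_space"
  assumes "continuous_on UNIV f" "\<Omega> \<in> sets lebesgue"
  shows "set_borel_measurable lebesgue \<Omega> f"
proof -
  have "f \<in> borel_measurable lborel"
    using borel_measurable_continuous_onI[OF assms(1)] by simp
  then have "f \<in> borel_measurable lebesgue"
    by (rule measurable_completion)
  then show ?thesis
    unfolding set_borel_measurable_def using assms(2) by measurable
qed

lemma set_integrable_bounded:
  fixes f :: "'a::euclidean_space \<Rightarrow> real"
  assumes "\<Omega> \<in> lmeasurable" "set_borel_measurable lebesgue \<Omega> f" "\<And>x. x \<in> \<Omega> \<Longrightarrow> \<bar>f x\<bar> \<le> B"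
  shows "set_integrable lebesgue \<Omega> f"
proof (rule set_integrable_bound[where f = "\<lambda>_. B"])
  show "set_integrable lebesgue \<Omega> (\<lambda>_. B)"
    using assms(1) unfolding set_integrable_def
    by (intro integrable_scaleR_left integrable_real_indicator) (auto simp: fmeasurable_def)
  show "AE x in lebesgue. x \<in> \<Omega> \<longrightarrow> norm (f x) \<le> norm B"
    using assms(3) by (auto intro!: AE_I2 order_trans[OF _ abs_ge_self])
qed (use assms(2) in simp)

lemma set_integrable_of_square_integrable:
  fixes g :: "'a::euclidean_space \<Rightarrow> real"
  assumes "\<Omega> \<in> lmeasurable" "set_borel_measurable lebesgue \<Omega> g"
    and "set_integrable lebesgue \<Omega> (\<lambda>x. (g x)\<^sup>2)"
  shows "set_integrable lebesgue \<Omega> g"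
proof (rule set_integrable_bound[where f = "\<lambda>x. 1 + (g x)\<^sup>2"])
  show "set_integrable lebesgue \<Omega> (\<lambda>x. 1 + (g x)\<^sup>2)"
    using assms(1,3) set_integrable_bounded[of \<Omega> "\<lambda>_. 1" 1]
    by (intro set_integral_add(1)) auto
  have "\<bar>g x\<bar> \<le> 1 + (g x)\<^sup>2" for x
    using zero_le_power2[of "\<bar>g x\<bar> - 1"] by (simp add: power2_eq_square algebra_simps)
  then show "AE x in lebesgue. x \<in> \<Omega> \<longrightarrow> norm (g x) \<le> norm (1 + (g x)\<^sup>2)"
    by (auto intro!: AE_I2)
qed (use assms(2) in simp)

text \<open>\<open>L\<^sup>2\<close>-convergence implies \<open>L\<^sup>1\<close>-convergence on a set of finite measure, via
  \<open>\<bar>f\<bar> \<le> f\<^sup>2 / (2 \<delta>) + \<delta> / 2\<close> for every \<open>\<delta> > 0\<close>.\<close>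
lemma tendsto_set_integral_abs_of_L2:
  fixes f :: "nat \<Rightarrow> 'a::euclidean_space \<Rightarrow> real"
  assumes \<Omega>: "\<Omega> \<in> lmeasurable" and meas: "\<And>k. set_borel_measurable lebesgue \<Omega> (f k)"
    and sq: "\<And>k. set_integrable lebesgue \<Omega> (\<lambda>x. (f k x)\<^sup>2)"
    and lim: "(\<lambda>k. LINT x:\<Omega>|lebesgue. (f k x)\<^sup>2) \<longlonglongrightarrow> 0"
  shows "(\<lambda>k. LINT x:\<Omega>|lebesgue. \<bar>f k x\<bar>) \<longlonglongrightarrow> 0"
proof (rule LIMSEQ_I)
  fix \<epsilon> :: real assume "0 < \<epsilon>"
  define m where "m = measure lebesgue \<Omega>"
  define \<delta> where "\<delta> = \<epsilon> / (m + 1)"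
  have m: "0 \<le> m"
    by (simp add: m_def)
  have \<delta>: "0 < \<delta>" "\<delta> * m < \<epsilon>"
    using \<open>0 < \<epsilon>\<close> m by (auto simp: \<delta>_def field_simps)
  have const: "set_integrable lebesgue \<Omega> (\<lambda>_. \<delta> / 2)" "(LINT x:\<Omega>|lebesgue. \<delta> / 2) = \<delta> / 2 * m"
    using \<Omega> set_integrable_bounded[of \<Omega> "\<lambda>_. \<delta> / 2" "\<delta> / 2"]
    by (auto simp: m_def set_integral_const fmeasurable_def)
  obtain N where N: "\<And>k. N \<le> k \<Longrightarrow> \<bar>LINT x:\<Omega>|lebesgue. (f k x)\<^sup>2\<bar> < \<delta> * \<epsilon>"
    using LIMSEQ_D[OF lim, of "\<delta> * \<epsilon>"] \<delta> \<open>0 < \<epsilon>\<close> by auto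
  have "\<bar>LINT x:\<Omega>|lebesgue. \<bar>f k x\<bar>\<bar> < \<epsilon>" if "N \<le> k" for k
  proof -
    have pointwise: "\<bar>f k x\<bar> \<le> (f k x)\<^sup>2 / (2 * \<delta>) + \<delta> / 2" for x
    proof -
      have "2 * \<delta> * \<bar>f k x\<bar> \<le> (f k x)\<^sup>2 + \<delta>\<^sup>2"
        using zero_le_power2[of "\<bar>f k x\<bar> - \<delta>"] by (simp add: power2_eq_square algebra_simps)
      then show ?thesis
        using \<delta> by (simp add: field_simps power2_eq_square)
    qed
    have abs_int: "set_integrable lebesgue \<Omega> (\<lambda>x. \<bar>f k x\<bar>)"
      using set_integrable_of_square_integrable[OF \<Omega> meas sq] by (rule set_integrable_abs)
    have "(LINT x:\<Omega>|lebesgue. \<bar>f k x\<bar>) \<le> (LINT x:\<Omega>|lebesgue. (f k x)\<^sup>2 / (2 * \<delta>) + \<delta> / 2)"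
      using abs_int sq const pointwise by (intro set_integral_mono set_integral_add(1)) auto
    also have "\<dots> = (LINT x:\<Omega>|lebesgue. (f k x)\<^sup>2) / (2 * \<delta>) + \<delta> / 2 * m"
      using sq const by (simp add: set_integral_add(2))
    also have "\<dots> < \<epsilon> / 2 + \<epsilon> / 2"
      using N[OF that] \<delta> by (intro add_strict_mono) (auto simp: field_simps)
    moreover have "0 \<le> (LINT x:\<Omega>|lebesgue. \<bar>f k x\<bar>)"
      unfolding set_lebesgue_integral_def by (intro Bochner_Integration.integral_nonneg) simp
    ultimately show ?thesis
      by simp
  qed
  then show "\<exists>N. \<forall>k\<ge>N. norm ((LINT x:\<Omega>|lebesgue. \<bar>f k x\<bar>) - 0) < \<epsilon>"
    by auto
qed

lemma set_borel_measurable_iff_lebesgue_on: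
  fixes f :: "'a::euclidean_space \<Rightarrow> 'b::real_normed_vector"
  shows "\<Omega> \<in> sets lebesgue \<Longrightarrow> set_borel_measurable lebesgue \<Omega> f \<longleftrightarrow> f \<in> borel_measurable (lebesgue_on \<Omega>)"
  unfolding set_borel_measurable_def by (simp add: borel_measurable_restrict_space_iff)

lemma norm_diff_squared_le: "(norm (a - b))\<^sup>2 \<le> 2 * (norm a)\<^sup>2 + 2 * (norm b)\<^sup>2"
  for a b :: "'a::real_normed_vector"
proof -
  have "(norm (a - b))\<^sup>2 \<le> (norm a + norm b)\<^sup>2"
    by (intro power_mono norm_triangle_ineq4) auto
  also have "\<dots> \<le> 2 * (norm a)\<^sup>2 + 2 * (norm b)\<^sup>2"
    using zero_le_power2[of "norm a - norm b"] by (simp add: power2_eq_square algebra_simps)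
  finally show ?thesis .
qed

lemma tendsto_set_integral_inner_of_L2:
  fixes b g :: "'a::euclidean_space \<Rightarrow> 'b::euclidean_space" and f :: "nat \<Rightarrow> 'a \<Rightarrow> 'b"
  assumes \<Omega>: "\<Omega> \<in> lmeasurable"
    and b: "b \<in> borel_measurable (lebesgue_on \<Omega>)" "\<And>x. x \<in> \<Omega> \<Longrightarrow> norm (b x) \<le> B"
    and f: "\<And>k. f k \<in> borel_measurable (lebesgue_on \<Omega>)"
      "\<And>k. set_integrable lebesgue \<Omega> (\<lambda>x. (norm (f k x))\<^sup>2)"
    and g: "g \<in> borel_measurable (lebesgue_on \<Omega>)" "set_integrable lebesgue \<Omega> (\<lambda>x. (norm (g x))\<^sup>2)"
    and lim: "(\<lambda>k. LINT x:\<Omega>|lebesgue. (norm (f k x - g x))\<^sup>2) \<longlonglongrightarrow> 0"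
  shows "(\<lambda>k. LINT x:\<Omega>|lebesgue. b x \<bullet> f k x) \<longlonglongrightarrow> (LINT x:\<Omega>|lebesgue. b x \<bullet> g x)"
proof -
  have \<Omega>_sets: "\<Omega> \<in> sets lebesgue"
    using \<Omega> by (rule fmeasurableD)
  note on_\<Omega> = set_borel_measurable_iff_lebesgue_on[OF \<Omega>_sets]
  have norm_int: "set_integrable lebesgue \<Omega> (\<lambda>x. norm (F x))"
    if "F \<in> borel_measurable (lebesgue_on \<Omega>)" "set_integrable lebesgue \<Omega> (\<lambda>x. (norm (F x))\<^sup>2)"
    for F :: "'a \<Rightarrow> 'c::euclidean_space"
  proof (rule set_integrable_of_square_integrable[OF \<Omega> _ that(2)])
    show "set_borel_measurable lebesgue \<Omega> (\<lambda>x. norm (F x))"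
      unfolding on_\<Omega> using measurable_compose[OF that(1) borel_measurable_norm] .
  qed
  have inner_int: "set_integrable lebesgue \<Omega> (\<lambda>x. b x \<bullet> F x)"
    if F: "F \<in> borel_measurable (lebesgue_on \<Omega>)" "set_integrable lebesgue \<Omega> (\<lambda>x. (norm (F x))\<^sup>2)" for F
  proof (rule set_integrable_bound[where f = "\<lambda>x. B * norm (F x)"])
    show "set_integrable lebesgue \<Omega> (\<lambda>x. B * norm (F x))"
      using norm_int[OF F] by simp
    show "set_borel_measurable lebesgue \<Omega> (\<lambda>x. b x \<bullet> F x)"
      unfolding on_\<Omega> by (intro borel_measurable_inner b(1) F(1))
    have "\<bar>b x \<bullet> F x\<bar> \<le> B * norm (F x)" if "x \<in> \<Omega>" for x
    proof -
      have "\<bar>b x \<bullet> F x\<bar> \<le> norm (b x) * norm (F x)"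
        by (rule Cauchy_Schwarz_ineq2)
      also have "\<dots> \<le> B * norm (F x)"
        using b(2)[OF that] by (rule mult_right_mono) simp
      finally show ?thesis .
    qed
    then show "AE x in lebesgue. x \<in> \<Omega> \<longrightarrow> norm (b x \<bullet> F x) \<le> norm (B * norm (F x))"
      by (auto intro!: AE_I2 intro: order_trans[OF _ abs_ge_self])
  qed
  define e where "e k x = norm (f k x - g x)" for k x
  have e_meas: "e k \<in> borel_measurable (lebesgue_on \<Omega>)" for k
    unfolding e_def[abs_def] using borel_measurable_diff[OF f(1) g(1)] borel_measurable_norm
    by (rule measurable_compose)
  have e_sq: "set_integrable lebesgue \<Omega> (\<lambda>x. (e k x)\<^sup>2)" for k
  proof (rule set_integrable_bound[where f = "\<lambda>x. 2 * (norm (f k x))\<^sup>2 + 2 * (norm (g x))\<^sup>2"])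
    show "set_integrable lebesgue \<Omega> (\<lambda>x. 2 * (norm (f k x))\<^sup>2 + 2 * (norm (g x))\<^sup>2)"
      using f(2) g(2) by (intro set_integral_add(1) set_integrable_mult_right)
    show "set_borel_measurable lebesgue \<Omega> (\<lambda>x. (e k x)\<^sup>2)"
      unfolding on_\<Omega> using e_meas by (rule borel_measurable_power)
    show "AE x in lebesgue. x \<in> \<Omega> \<longrightarrow> norm ((e k x)\<^sup>2) \<le> norm (2 * (norm (f k x))\<^sup>2 + 2 * (norm (g x))\<^sup>2)"
      using norm_diff_squared_le by (auto intro!: AE_I2 simp: e_def)
  qed
  have "(\<lambda>k. LINT x:\<Omega>|lebesgue. \<bar>e k x\<bar>) \<longlonglongrightarrow> 0"
  proof (rule tendsto_set_integral_abs_of_L2[OF \<Omega>])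
    show "set_borel_measurable lebesgue \<Omega> (e k)" for k
      using e_meas by (simp add: on_\<Omega>)
    show "set_integrable lebesgue \<Omega> (\<lambda>x. (e k x)\<^sup>2)" for k
      by (rule e_sq)
    show "(\<lambda>k. LINT x:\<Omega>|lebesgue. (e k x)\<^sup>2) \<longlonglongrightarrow> 0"
      using lim by (simp add: e_def)
  qed
  then have bound_0: "(\<lambda>k. B * (LINT x:\<Omega>|lebesgue. \<bar>e k x\<bar>)) \<longlonglongrightarrow> 0"
    by (rule tendsto_mult_right_zero)
  have "norm ((LINT x:\<Omega>|lebesgue. b x \<bullet> f k x) - (LINT x:\<Omega>|lebesgue. b x \<bullet> g x))
      \<le> B * (LINT x:\<Omega>|lebesgue. \<bar>e k x\<bar>)" for k
  proof -
    have ints: "set_integrable lebesgue \<Omega> (\<lambda>x. b x \<bullet> f k x - b x \<bullet> g x)"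
      using inner_int[OF f(1,2)] inner_int[OF g] by (rule set_integral_diff(1))
    have "norm ((LINT x:\<Omega>|lebesgue. b x \<bullet> f k x) - (LINT x:\<Omega>|lebesgue. b x \<bullet> g x))
        = norm (LINT x:\<Omega>|lebesgue. b x \<bullet> f k x - b x \<bullet> g x)"
      using inner_int[OF f(1,2)] inner_int[OF g] by (simp add: set_integral_diff(2))
    also have "\<dots> \<le> (LINT x:\<Omega>|lebesgue. norm (b x \<bullet> f k x - b x \<bullet> g x))"
      using ints by (rule set_integral_norm_bound)
    also have "\<dots> \<le> (LINT x:\<Omega>|lebesgue. B * \<bar>e k x\<bar>)"
    proof (rule set_integral_mono)
      show "set_integrable lebesgue \<Omega> (\<lambda>x. norm (b x \<bullet> f k x - b x \<bullet> g x))"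
        using ints by (simp add: set_integrable_abs)
      show "set_integrable lebesgue \<Omega> (\<lambda>x. B * \<bar>e k x\<bar>)"
        using set_integrable_of_square_integrable[OF \<Omega> _ e_sq] e_meas
        by (simp add: on_\<Omega> set_integrable_abs)
      show "norm (b x \<bullet> f k x - b x \<bullet> g x) \<le> B * \<bar>e k x\<bar>" if "x \<in> \<Omega>" for x
      proof -
        have "norm (b x \<bullet> f k x - b x \<bullet> g x) \<le> norm (b x) * e k x"
          using Cauchy_Schwarz_ineq2[of "b x" "f k x - g x"] by (simp add: e_def inner_diff_right)
        also have "\<dots> \<le> B * \<bar>e k x\<bar>"
          using b(2)[OF that] by (simp add: e_def mult_right_mono)
        finally show ?thesis .
      qed
    qed
    also have "\<dots> = B * (LINT x:\<Omega>|lebesgue. \<bar>e k x\<bar>)"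
      by simp
    finally show ?thesis .
  qed
  then have "(\<lambda>k. (LINT x:\<Omega>|lebesgue. b x \<bullet> f k x) - (LINT x:\<Omega>|lebesgue. b x \<bullet> g x)) \<longlonglongrightarrow> 0"
    by (intro Lim_null_comparison[OF always_eventually bound_0]) auto
  then show ?thesis
    by (simp add: LIM_zero_iff)
qed

lemma test_fun_continuous: "test_fun \<Omega> \<phi> D\<phi> \<Longrightarrow> continuous_on UNIV \<phi>"
  unfolding test_fun_def by (meson continuous_at_imp_continuous_on has_derivative_continuous)

lemma test_fun_vanishes_outside_support:
  assumes "test_fun \<Omega> \<phi> D\<phi>" "x \<notin> closure {x. \<phi> x \<noteq> 0}"
  shows "\<phi> x = 0" "D\<phi> x = 0"
proof -
  let ?U = "- closure {x. \<phi> x \<noteq> 0}"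
  have U: "open ?U" "x \<in> ?U"
    using assms(2) by auto
  have zero: "\<phi> y = 0" if "y \<in> ?U" for y
  proof -
    have "y \<notin> {x. \<phi> x \<noteq> 0}"
      using that closure_subset[of "{x. \<phi> x \<noteq> 0}"] by blast
    then show ?thesis
      by simp
  qed
  then show "\<phi> x = 0"
    using U(2) .
  have "(\<phi> has_derivative (\<lambda>y. D\<phi> x \<bullet> y)) (at x)"
    using assms(1) by (simp add: test_fun_def)
  moreover have "(\<phi> has_derivative (\<lambda>y. 0)) (at x)"
    by (rule has_derivative_transform_within_open[OF has_derivative_const U]) (rule zero[symmetric])
  ultimately have "(\<lambda>y. D\<phi> x \<bullet> y) = (\<lambda>y. 0)"
    by (rule has_derivative_unique)
  then show "D\<phi> x = 0"
    by (metis inner_eq_zero_iff)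
qed

lemma test_fun_ball_outside:
  assumes "test_fun (ball 0 R) \<phi> D\<phi>" "R \<le> norm x"
  shows "\<phi> x = 0" "D\<phi> x = 0"
proof -
  have "closure {x. \<phi> x \<noteq> 0} \<subseteq> ball 0 R"
    using assms(1) by (simp add: test_fun_def)
  moreover have "x \<notin> ball 0 R"
    using assms(2) by simp
  ultimately have "x \<notin> closure {x. \<phi> x \<noteq> 0}"
    by blast
  then show "\<phi> x = 0" "D\<phi> x = 0"
    by (rule test_fun_vanishes_outside_support[OF assms(1)])+
qed

lemma test_fun_bounded:
  assumes "test_fun \<Omega> \<phi> D\<phi>"
  shows "bounded (range \<phi>)" "bounded (range D\<phi>)"
proof -
  let ?K = "closure {x. \<phi> x \<noteq> 0}"
  have "compact ?K" "continuous_on ?K \<phi>" "continuous_on ?K D\<phi>"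
    using assms test_fun_continuous[OF assms] by (auto simp: test_fun_def intro: continuous_on_subset)
  then have "bounded (\<phi> ` ?K)" "bounded (D\<phi> ` ?K)"
    by (simp_all add: compact_imp_bounded compact_continuous_image)
  moreover have "\<phi> x \<in> insert 0 (\<phi> ` ?K) \<and> D\<phi> x \<in> insert 0 (D\<phi> ` ?K)" for x
  proof (cases "x \<in> ?K")
    case False
    then have "\<phi> x = 0" "D\<phi> x = 0"
      by (rule test_fun_vanishes_outside_support[OF assms])+
    then show ?thesis
      by simp
  qed simp
  then have "range \<phi> \<subseteq> insert 0 (\<phi> ` ?K)" "range D\<phi> \<subseteq> insert 0 (D\<phi> ` ?K)"
    by blast+
  ultimately show "bounded (range \<phi>)" "bounded (range D\<phi>)"
    by (meson bounded_insert bounded_subset)+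
qed

lemma test_fun_square_integrable:
  assumes "test_fun \<Omega> \<phi> D\<phi>" "\<Omega> \<in> lmeasurable"
  shows "set_integrable lebesgue \<Omega> (\<lambda>x. (\<phi> x)\<^sup>2)" "set_integrable lebesgue \<Omega> (\<lambda>x. (norm (D\<phi> x))\<^sup>2)"
proof -
  from test_fun_bounded[OF assms(1)] obtain A B where "\<forall>y\<in>range \<phi>. norm y \<le> A" "\<forall>y\<in>range D\<phi>. norm y \<le> B"
    unfolding bounded_iff by blast
  then have AB: "\<bar>\<phi> x\<bar> \<le> A" "norm (D\<phi> x) \<le> B" for x
    by auto
  have bounds: "\<bar>(\<phi> x)\<^sup>2\<bar> \<le> A\<^sup>2" "\<bar>(norm (D\<phi> x))\<^sup>2\<bar> \<le> B\<^sup>2" for x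
    using power_mono[OF AB(1) abs_ge_zero, where n = 2] power_mono[OF AB(2) norm_ge_zero, where n = 2]
    by simp_all
  have "continuous_on UNIV (\<lambda>x. (\<phi> x)\<^sup>2)" "continuous_on UNIV (\<lambda>x. (norm (D\<phi> x))\<^sup>2)"
    using assms(1) test_fun_continuous[OF assms(1)] by (auto intro!: continuous_intros simp: test_fun_def)
  then have meas: "set_borel_measurable lebesgue \<Omega> (\<lambda>x. (\<phi> x)\<^sup>2)"
    "set_borel_measurable lebesgue \<Omega> (\<lambda>x. (norm (D\<phi> x))\<^sup>2)"
    using fmeasurableD[OF assms(2)] by (simp_all add: set_borel_measurable_continuous)
  show "set_integrable lebesgue \<Omega> (\<lambda>x. (\<phi> x)\<^sup>2)"
    by (rule set_integrable_bounded[OF assms(2) meas(1)]) (rule bounds(1))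
  show "set_integrable lebesgue \<Omega> (\<lambda>x. (norm (D\<phi> x))\<^sup>2)"
    by (rule set_integrable_bounded[OF assms(2) meas(2)]) (rule bounds(2))
qed

lemma set_integral_by_parts_test_fun:
  fixes u du \<phi> :: "'a::euclidean_space \<Rightarrow> real"
  assumes \<phi>: "test_fun (ball 0 R) \<phi> D\<phi>"
    and u: "continuous_on UNIV u" "\<And>x. ((\<lambda>t. u (x + t *\<^sub>R e)) has_real_derivative du x) (at 0)"
      "du \<in> borel_measurable borel" "\<And>\<rho>. bounded (du ` cball 0 \<rho>)"
  shows "(LINT x:ball 0 R|lebesgue. u x * (D\<phi> x \<bullet> e)) = - (LINT x:ball 0 R|lebesgue. du x * \<phi> x)"
proof -
  have cont: "continuous_on UNIV \<phi>" "continuous_on UNIV (\<lambda>x. D\<phi> x \<bullet> e)"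
    using \<phi> test_fun_continuous[OF \<phi>] by (auto simp: test_fun_def intro: continuous_on_inner continuous_on_const)
  have outside: "\<phi> x = 0" "D\<phi> x \<bullet> e = 0" if "R \<le> norm x" for x
    using test_fun_ball_outside[OF \<phi> that] by simp_all
  have "u \<in> borel_measurable borel" "\<phi> \<in> borel_measurable borel" "(\<lambda>x. D\<phi> x \<bullet> e) \<in> borel_measurable borel"
    using u(1) cont by (simp_all add: borel_measurable_continuous_onI)
  then have meas: "(\<lambda>x. u x * (D\<phi> x \<bullet> e)) \<in> borel_measurable borel" "(\<lambda>x. du x * \<phi> x) \<in> borel_measurable borel"
    using u(3) by (auto intro: borel_measurable_times)
  have "integral\<^sup>L lborel (\<lambda>x. u x * (D\<phi> x \<bullet> e)) = - integral\<^sup>L lborel (\<lambda>x. du x * \<phi> x)"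
  proof (rule lborel_integral_by_parts[OF u cont(1) _ cont(2)])
    show "((\<lambda>t. \<phi> (x + t *\<^sub>R e)) has_real_derivative D\<phi> x \<bullet> e) (at 0)" for x
      using \<phi> by (intro has_real_derivative_along_line) (simp add: test_fun_def)
    show "\<phi> x = 0 \<and> D\<phi> x \<bullet> e = 0" if "R < norm x" for x
      using outside that by simp
  qed
  moreover have "(LINT x:ball 0 R|lebesgue. u x * (D\<phi> x \<bullet> e)) = integral\<^sup>L lborel (\<lambda>x. u x * (D\<phi> x \<bullet> e))"
    by (rule set_lebesgue_integral_eq_lborel[OF meas(1)]) (simp add: outside)
  moreover have "(LINT x:ball 0 R|lebesgue. du x * \<phi> x) = integral\<^sup>L lborel (\<lambda>x. du x * \<phi> x)"
    by (rule set_lebesgue_integral_eq_lborel[OF meas(2)]) (simp add: outside)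
  ultimately show ?thesis
    by simp
qed

lemma H10_test_fun:
  fixes v :: "'a::euclidean_space \<Rightarrow> real"
  assumes v: "test_fun (ball 0 R) v Gv"
  shows "H10 (ball 0 R) v Gv"
proof -
  have cont: "continuous_on UNIV v" "continuous_on UNIV Gv"
    using v test_fun_continuous[OF v] by (simp_all add: test_fun_def)
  have meas: "set_borel_measurable lebesgue (ball 0 R) v" "set_borel_measurable lebesgue (ball 0 R) Gv"
    using cont by (simp_all add: set_borel_measurable_continuous)
  have "weak_grad (ball 0 R) v Gv"
    unfolding weak_grad_def
  proof (intro allI impI ballI)
    fix \<phi> :: "'a \<Rightarrow> real" and D\<phi> :: "'a \<Rightarrow> 'a" and i :: 'a
    assume \<phi>: "test_fun (ball 0 R) \<phi> D\<phi>"
    have grad_i: "continuous_on UNIV (\<lambda>x. Gv x \<bullet> i)"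
      by (intro continuous_on_inner cont(2) continuous_on_const)
    show "(LINT x:ball 0 R|lebesgue. v x * (D\<phi> x \<bullet> i)) = - (LINT x:ball 0 R|lebesgue. (Gv x \<bullet> i) * \<phi> x)"
    proof (rule set_integral_by_parts_test_fun[OF \<phi> cont(1)])
      show "((\<lambda>t. v (x + t *\<^sub>R i)) has_real_derivative Gv x \<bullet> i) (at 0)" for x
        using v by (intro has_real_derivative_along_line) (simp add: test_fun_def)
      show "(\<lambda>x. Gv x \<bullet> i) \<in> borel_measurable borel"
        using grad_i by (rule borel_measurable_continuous_onI)
      show "bounded ((\<lambda>x. Gv x \<bullet> i) ` cball 0 \<rho>)" for \<rho>
        using grad_i by (rule bounded_cball_image_continuous)
    qed
  qed
  moreover have "\<exists>\<psi> D\<psi>. (\<forall>k::nat. test_fun (ball 0 R) (\<psi> k) (D\<psi> k)) \<and>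
      (\<lambda>k. LINT x:ball 0 R|lebesgue. (\<psi> k x - v x)\<^sup>2) \<longlonglongrightarrow> 0 \<and>
      (\<lambda>k. LINT x:ball 0 R|lebesgue. (norm (D\<psi> k x - Gv x))\<^sup>2) \<longlonglongrightarrow> 0"
    using v by (intro exI[of _ "\<lambda>_. v"] exI[of _ "\<lambda>_. Gv"]) simp
  ultimately show ?thesis
    unfolding H10_def L2_on_def L2v_on_def using meas test_fun_square_integrable[OF v] by simp
qed

text \<open>The weak inequality is obtained from the pointwise one on test functions and passes to
  \<open>H\<^sup>1\<^sub>0\<close> along the approximating sequence, since \<open>Gv\<close> and \<open>Lv\<close> are bounded on \<open>\<Omega>\<close>.\<close>
lemma weak_subsolution_of_pointwise:
  fixes Gv :: "'a::euclidean_space \<Rightarrow> 'a" and Lv g \<phi> :: "'a \<Rightarrow> real"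
  assumes \<Omega>: "\<Omega> \<in> lmeasurable"
    and Gv: "Gv \<in> borel_measurable (lebesgue_on \<Omega>)" "\<And>x. x \<in> \<Omega> \<Longrightarrow> norm (Gv x) \<le> B\<^sub>G"
    and Lv: "Lv \<in> borel_measurable (lebesgue_on \<Omega>)" "\<And>x. x \<in> \<Omega> \<Longrightarrow> \<bar>Lv x\<bar> \<le> B\<^sub>L"
    and g: "g \<in> borel_measurable (lebesgue_on \<Omega>)" "\<And>x. x \<in> \<Omega> \<Longrightarrow> \<bar>g x\<bar> \<le> B\<^sub>g"
    and by_parts: "\<And>\<psi> D\<psi>. test_fun \<Omega> \<psi> D\<psi> \<Longrightarrow>
      (LINT x:\<Omega>|lebesgue. Gv x \<bullet> D\<psi> x) = - (LINT x:\<Omega>|lebesgue. Lv x * \<psi> x)"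
    and pointwise: "\<And>x. x \<in> \<Omega> \<Longrightarrow> - Lv x \<le> lam * g x"
    and \<phi>: "H10 \<Omega> \<phi> G\<phi>" "\<And>x. x \<in> \<Omega> \<Longrightarrow> 0 \<le> \<phi> x"
  shows "(LINT x:\<Omega>|lebesgue. Gv x \<bullet> G\<phi> x) \<le> lam * (LINT x:\<Omega>|lebesgue. g x * \<phi> x)"
proof -
  note on_\<Omega> = set_borel_measurable_iff_lebesgue_on[OF fmeasurableD[OF \<Omega>]]
  obtain \<psi> D\<psi> where tf: "\<And>k. test_fun \<Omega> (\<psi> k) (D\<psi> k)"
    and lim_\<psi>: "(\<lambda>k. LINT x:\<Omega>|lebesgue. (\<psi> k x - \<phi> x)\<^sup>2) \<longlonglongrightarrow> 0"
    and lim_D\<psi>: "(\<lambda>k. LINT x:\<Omega>|lebesgue. (norm (D\<psi> k x - G\<phi> x))\<^sup>2) \<longlonglongrightarrow> 0"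
    using \<phi>(1) unfolding H10_def by blast
  have \<phi>_meas: "\<phi> \<in> borel_measurable (lebesgue_on \<Omega>)" "G\<phi> \<in> borel_measurable (lebesgue_on \<Omega>)"
    and \<phi>_sq: "set_integrable lebesgue \<Omega> (\<lambda>x. (\<phi> x)\<^sup>2)" "set_integrable lebesgue \<Omega> (\<lambda>x. (norm (G\<phi> x))\<^sup>2)"
    using \<phi>(1) by (simp_all add: H10_def L2_on_def L2v_on_def flip: on_\<Omega>)
  have cont: "continuous_on UNIV (\<psi> k)" "continuous_on UNIV (D\<psi> k)" for k
    using tf[of k] test_fun_continuous[OF tf] by (simp_all add: test_fun_def)
  have \<psi>_meas: "\<psi> k \<in> borel_measurable (lebesgue_on \<Omega>)" "D\<psi> k \<in> borel_measurable (lebesgue_on \<Omega>)" for k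
    using cont fmeasurableD[OF \<Omega>] by (simp_all add: set_borel_measurable_continuous flip: on_\<Omega>)
  note \<psi>_sq = test_fun_square_integrable[OF tf \<Omega>]
  have lim_grad: "(\<lambda>k. LINT x:\<Omega>|lebesgue. Gv x \<bullet> D\<psi> k x) \<longlonglongrightarrow> (LINT x:\<Omega>|lebesgue. Gv x \<bullet> G\<phi> x)"
    by (rule tendsto_set_integral_inner_of_L2[OF \<Omega> Gv \<psi>_meas(2) \<psi>_sq(2) \<phi>_meas(2) \<phi>_sq(2) lim_D\<psi>])
  have "(\<lambda>k. LINT x:\<Omega>|lebesgue. Lv x \<bullet> \<psi> k x) \<longlonglongrightarrow> (LINT x:\<Omega>|lebesgue. Lv x \<bullet> \<phi> x)"
    by (rule tendsto_set_integral_inner_of_L2[OF \<Omega> Lv(1) _ \<psi>_meas(1) _ \<phi>_meas(1)])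
      (use Lv(2) \<psi>_sq(1) \<phi>_sq(1) lim_\<psi> in simp_all)
  then have "(\<lambda>k. LINT x:\<Omega>|lebesgue. Gv x \<bullet> D\<psi> k x) \<longlonglongrightarrow> - (LINT x:\<Omega>|lebesgue. Lv x * \<phi> x)"
    using tendsto_minus by (simp add: by_parts[OF tf])
  with lim_grad have eq: "(LINT x:\<Omega>|lebesgue. Gv x \<bullet> G\<phi> x) = - (LINT x:\<Omega>|lebesgue. Lv x * \<phi> x)"
    by (rule LIMSEQ_unique)
  have \<phi>_int: "set_integrable lebesgue \<Omega> \<phi>"
    using set_integrable_of_square_integrable[OF \<Omega> _ \<phi>_sq(1)] \<phi>_meas(1) by (simp add: on_\<Omega>)
  have weighted_int: "set_integrable lebesgue \<Omega> (\<lambda>x. c x * \<phi> x)"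
    if c_meas: "c \<in> borel_measurable (lebesgue_on \<Omega>)"
      and c_bound: "\<And>x. x \<in> \<Omega> \<Longrightarrow> \<bar>c x\<bar> \<le> C" for c C
  proof (rule set_integrable_bound[where f = "\<lambda>x. C * \<phi> x"])
    show "set_integrable lebesgue \<Omega> (\<lambda>x. C * \<phi> x)"
      using \<phi>_int by simp
    show "set_borel_measurable lebesgue \<Omega> (\<lambda>x. c x * \<phi> x)"
      unfolding on_\<Omega> by (rule borel_measurable_times[OF c_meas \<phi>_meas(1)])
    have "\<bar>c x * \<phi> x\<bar> \<le> \<bar>C * \<phi> x\<bar>" if "x \<in> \<Omega>" for x
    proof -
      have "\<bar>c x\<bar> * \<bar>\<phi> x\<bar> \<le> \<bar>C\<bar> * \<bar>\<phi> x\<bar>"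
        using order_trans[OF c_bound[OF that] abs_ge_self] by (rule mult_right_mono) simp
      then show ?thesis
        by (simp add: abs_mult)
    qed
    then show "AE x in lebesgue. x \<in> \<Omega> \<longrightarrow> norm (c x * \<phi> x) \<le> norm (C * \<phi> x)"
      by (auto intro!: AE_I2)
  qed
  have "- (LINT x:\<Omega>|lebesgue. Lv x * \<phi> x) = (LINT x:\<Omega>|lebesgue. - Lv x * \<phi> x)"
    unfolding set_lebesgue_integral_def by simp
  also have "\<dots> \<le> (LINT x:\<Omega>|lebesgue. lam * (g x * \<phi> x))"
  proof (rule set_integral_mono)
    show "set_integrable lebesgue \<Omega> (\<lambda>x. - Lv x * \<phi> x)"
      using Lv by (intro weighted_int) (simp_all add: borel_measurable_uminus)
    show "set_integrable lebesgue \<Omega> (\<lambda>x. lam * (g x * \<phi> x))"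
      using weighted_int[OF g] by simp
    show "- Lv x * \<phi> x \<le> lam * (g x * \<phi> x)" if "x \<in> \<Omega>" for x
      using mult_right_mono[OF pointwise[OF that] \<phi>(2)[OF that]] by (simp add: mult.assoc)
  qed
  also have "\<dots> = lam * (LINT x:\<Omega>|lebesgue. g x * \<phi> x)"
    by simp
  finally show ?thesis
    using eq by simp
qed

lemma has_derivative_real_comp:
  fixes g :: "'a::real_normed_vector \<Rightarrow> real"
  assumes "(f has_real_derivative D) (at (g x))" "(g has_derivative g') (at x)"
  shows "((\<lambda>x. f (g x)) has_derivative (\<lambda>y. D * g' y)) (at x)"
  using has_derivative_compose[OF assms(2) has_field_derivative_imp_has_derivative[OF assms(1)]] .

lemma continuous_on_atLeastLessThan_bounded_above:
  fixes f :: "real \<Rightarrow> real"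
  assumes "continuous_on {a..<b} f" "(f \<longlongrightarrow> l) (at_left b)"
  obtains M where "\<And>t. t \<in> {a..<b} \<Longrightarrow> f t \<le> M"
proof -
  have "eventually (\<lambda>t. f t < l + 1) (at_left b)"
    using order_tendstoD(2)[OF assms(2), of "l + 1"] by simp
  then obtain c where "c < b" and near_b: "\<And>t. c < t \<Longrightarrow> t < b \<Longrightarrow> f t < l + 1"
    unfolding eventually_at_left_field by blast
  have "continuous_on {a..c} f"
    using \<open>c < b\<close> by (intro continuous_on_subset[OF assms(1)]) auto
  then have "bounded (f ` {a..c})"
    by (intro compact_imp_bounded compact_continuous_image compact_Icc)
  then obtain K where "\<forall>y\<in>f ` {a..c}. norm y \<le> K"
    using bounded_iff by blast
  then have K: "f t \<le> K" if "t \<in> {a..c}" for t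
    using that by force
  show ?thesis
  proof
    fix t assume t: "t \<in> {a..<b}"
    show "f t \<le> max K (l + 1)"
    proof (cases "t \<le> c")
      case True
      then show ?thesis
        using K[of t] t by force
    next
      case False
      then show ?thesis
        using near_b[of t] t by force
    qed
  qed
qed

lemma exponent_for_blowup:
  assumes "\<gamma> < 2"
  obtains n :: nat where "3 \<le> n" "real n * \<gamma> \<le> 2 * real n - 2"
proof
  define n where "n = nat \<lceil>2 / (2 - \<gamma>)\<rceil> + 3"
  show "3 \<le> n"
    by (simp add: n_def)
  have "2 / (2 - \<gamma>) \<le> real n"
    using real_nat_ceiling_ge[of "2 / (2 - \<gamma>)"] by (simp add: n_def)
  then have "2 \<le> real n * (2 - \<gamma>)"
    using assms by (simp add: field_simps)
  then show "real n * \<gamma> \<le> 2 * real n - 2"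
    by (simp add: algebra_simps)
qed

locale radial_subsolution = radial_profile_bounds +
  fixes R :: real
  assumes a_pos: "0 < a" and R_pos: "0 < R" and transition_in_ball: "a + d < R\<^sup>2"
begin

definition v :: "'n::euclidean_space \<Rightarrow> real" where
  "v x = F (x \<bullet> x)"

definition grad_v :: "'n::euclidean_space \<Rightarrow> 'n" where
  "grad_v x = (2 * F' (x \<bullet> x)) *\<^sub>R x"

definition second_partial_v :: "'n::euclidean_space \<Rightarrow> 'n \<Rightarrow> real" where
  "second_partial_v i x = 4 * F'' (x \<bullet> x) * (x \<bullet> i)\<^sup>2 + 2 * F' (x \<bullet> x)"

definition laplace_v :: "'n::euclidean_space \<Rightarrow> real" where
  "laplace_v x = (\<Sum>i\<in>Basis. second_partial_v i x)"

lemma laplace_v_eq: "laplace_v x = 2 * real DIM('n) * F' (x \<bullet> x) + 4 * (x \<bullet> x) * F'' (x \<bullet> x)"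
  for x :: "'n::euclidean_space"
proof -
  have "laplace_v x = 4 * F'' (x \<bullet> x) * (\<Sum>i\<in>Basis. (x \<bullet> i)\<^sup>2) + real DIM('n) * (2 * F' (x \<bullet> x))"
    by (simp add: laplace_v_def second_partial_v_def sum.distrib sum_distrib_left)
  moreover have "(\<Sum>i\<in>Basis. (x \<bullet> i)\<^sup>2) = x \<bullet> x"
    by (simp add: euclidean_inner[of x x] power2_eq_square)
  ultimately show ?thesis
    by simp
qed

lemma has_derivative_v: "(v has_derivative (\<lambda>y. grad_v x \<bullet> y)) (at x)"
proof -
  have "((\<lambda>x. F (x \<bullet> x)) has_derivative (\<lambda>y. F' (x \<bullet> x) * (x \<bullet> y + y \<bullet> x))) (at x)"
    by (rule has_derivative_real_comp[OF has_real_derivative_F]) (auto intro!: derivative_eq_intros)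
  then show ?thesis
    unfolding v_def[abs_def] grad_v_def
    by (rule has_derivative_eq_rhs) (auto simp: fun_eq_iff inner_commute algebra_simps)
qed

lemma continuous_on_v: "continuous_on UNIV (v :: 'n::euclidean_space \<Rightarrow> real)"
  unfolding v_def[abs_def] by (intro continuous_on_compose2[OF continuous_on_F] continuous_intros) auto

lemma continuous_on_grad_v: "continuous_on UNIV (grad_v :: 'n::euclidean_space \<Rightarrow> 'n)"
  unfolding grad_v_def[abs_def] by (intro continuous_intros continuous_on_compose2[OF continuous_on_F']) auto

lemma has_real_derivative_grad_v_component:
  assumes "i \<in> Basis"
  shows "((\<lambda>t. grad_v (x + t *\<^sub>R i) \<bullet> i) has_real_derivative second_partial_v i x) (at 0)"
proof -
  have F': "((\<lambda>x. F' (x \<bullet> x)) has_derivative (\<lambda>y. F'' (x \<bullet> x) * (x \<bullet> y + y \<bullet> x))) (at x)"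
    by (rule has_derivative_real_comp[OF has_real_derivative_F']) (auto intro!: derivative_eq_intros)
  have "((\<lambda>y. grad_v y \<bullet> i) has_derivative
      (\<lambda>z. 2 * (F'' (x \<bullet> x) * (x \<bullet> z + z \<bullet> x)) * (x \<bullet> i) + 2 * F' (x \<bullet> x) * (z \<bullet> i))) (at x)"
    unfolding grad_v_def inner_scaleR_left
    by (rule derivative_eq_intros F' refl | simp)+ (simp add: algebra_simps fun_eq_iff)
  from has_real_derivative_along_line[OF this, of i] show ?thesis
    using assms by (simp add: second_partial_v_def inner_commute power2_eq_square algebra_simps)
qed

lemma v_plateau: "x \<bullet> x \<le> a \<Longrightarrow> v x = psi h \<sigma>"
  by (simp add: v_def F_def w_inner)

lemma v_outer: "a + d \<le> x \<bullet> x \<Longrightarrow> v x = 0"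
  by (simp add: v_def F_def w_outer psi_0)

lemma grad_v_outer: "a + d \<le> x \<bullet> x \<Longrightarrow> grad_v x = 0"
  by (simp add: grad_v_def F'_outside)

lemma v_bounds: "0 \<le> v x" "v x \<le> psi h \<sigma>"
  using psi_increment_bounds[of 0 "w (x \<bullet> x)"] psi_increment_bounds[of "w (x \<bullet> x)" \<sigma>] w_bounds[of "x \<bullet> x"]
  by (auto simp: v_def F_def psi_0)

lemma outside_transition: "R \<le> norm x \<Longrightarrow> a + d \<le> x \<bullet> x"
  using transition_in_ball power_mono[of R "norm x" 2] R_pos by (simp add: power2_norm_eq_inner)

lemma test_fun_v: "test_fun (ball 0 R) (v :: 'n::euclidean_space \<Rightarrow> real) grad_v"
proof -
  define \<rho> where "\<rho> = sqrt (a + d)"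
  have \<rho>: "\<rho> < R"
    using transition_in_ball R_pos real_sqrt_less_iff[of "a + d" "R\<^sup>2"] by (simp add: \<rho>_def)
  have "{x::'n. v x \<noteq> 0} \<subseteq> cball 0 \<rho>"
  proof
    fix x :: 'n assume "x \<in> {x. v x \<noteq> 0}"
    then have "(norm x)\<^sup>2 \<le> a + d"
      using v_outer[of x] by (force simp: power2_norm_eq_inner)
    then show "x \<in> cball 0 \<rho>"
      by (simp add: \<rho>_def real_le_rsqrt)
  qed
  then have support: "closure {x::'n. v x \<noteq> 0} \<subseteq> cball 0 \<rho>"
    by (rule closure_minimal) simp
  show ?thesis
    unfolding test_fun_def
  proof (intro conjI allI)
    show "(v has_derivative (\<lambda>y. grad_v x \<bullet> y)) (at x)" for x :: 'n
      by (rule has_derivative_v)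
    show "continuous_on UNIV (grad_v :: 'n \<Rightarrow> 'n)"
      by (rule continuous_on_grad_v)
    show "compact (closure {x::'n. v x \<noteq> 0})"
      using support by (meson bounded_cball bounded_subset closed_closure compact_eq_bounded_closed)
    show "closure {x::'n. v x \<noteq> 0} \<subseteq> ball 0 R"
      using support \<rho> by auto
  qed
qed

end

lemma borel_measurable_lebesgue_on_of_borel:
  fixes f :: "'a::euclidean_space \<Rightarrow> 'b::euclidean_space"
  assumes "f \<in> borel_measurable borel"
  shows "f \<in> borel_measurable (lebesgue_on S)"
proof -
  have "f \<in> borel_measurable lebesgue"
    using assms by (intro measurable_completion) simp
  then show ?thesis
    by (rule measurable_restrict_space1)
qed

context radial_subsolution
begin

lemma second_partial_v_bounded: "bounded (second_partial_v i ` cball 0 \<rho>)" if "i \<in> Basis"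
proof -
  have "\<bar>second_partial_v i x\<bar> \<le> 4 * (bend_bound + singular_bound) * \<rho>\<^sup>2 + 2 * slope_bound"
    if "x \<in> cball 0 \<rho>" for x
  proof -
    have "(x \<bullet> i)\<^sup>2 \<le> \<rho>\<^sup>2"
      using Basis_le_norm[OF \<open>i \<in> Basis\<close>, of x] that abs_le_square_iff[of "x \<bullet> i" \<rho>] by auto
    then have "\<bar>4 * F'' (x \<bullet> x) * (x \<bullet> i)\<^sup>2\<bar> \<le> 4 * (bend_bound + singular_bound) * \<rho>\<^sup>2"
      using abs_F''_le[of "x \<bullet> x"] by (simp add: abs_mult mult_mono)
    then show ?thesis
      using abs_F'_le[of "x \<bullet> x"] unfolding second_partial_v_def by linarith
  qed
  then show ?thesis
    unfolding bounded_iff by (intro exI[of _ "4 * (bend_bound + singular_bound) * \<rho>\<^sup>2 + 2 * slope_bound"]) auto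
qed

lemma borel_measurable_F''_inner: "(\<lambda>x::'n::euclidean_space. F'' (x \<bullet> x)) \<in> borel_measurable borel"
  using borel_measurable_F'' by (rule measurable_compose[rotated])
    (intro borel_measurable_continuous_onI continuous_intros)

lemma borel_measurable_laplace_v: "(laplace_v :: 'n::euclidean_space \<Rightarrow> real) \<in> borel_measurable borel"
proof -
  have "(\<lambda>x::'n. F' (x \<bullet> x)) \<in> borel_measurable borel"
    by (intro borel_measurable_continuous_onI continuous_on_compose2[OF continuous_on_F'] continuous_intros) auto
  then show ?thesis
    using borel_measurable_F''_inner unfolding laplace_v_eq[abs_def] by measurable
qed

lemma by_parts_v:
  fixes \<psi> :: "'n::euclidean_space \<Rightarrow> real"
  assumes \<psi>: "test_fun (ball 0 R) \<psi> D\<psi>"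
  shows "(LINT x:ball 0 R|lebesgue. grad_v x \<bullet> D\<psi> x) = - (LINT x:ball 0 R|lebesgue. laplace_v x * \<psi> x)"
proof -
  let ?p = "\<lambda>i x. (grad_v x \<bullet> i) * (D\<psi> x \<bullet> i)" and ?q = "\<lambda>i x. second_partial_v i x * \<psi> x"
  have outside: "\<psi> x = 0" "D\<psi> x = 0" if "x \<notin> ball 0 R" for x
    using test_fun_ball_outside[OF \<psi>] that by auto
  have cont: "continuous_on UNIV \<psi>" "continuous_on UNIV D\<psi>"
    using \<psi> test_fun_continuous[OF \<psi>] by (simp_all add: test_fun_def)
  have grad_i: "continuous_on UNIV (\<lambda>x. grad_v x \<bullet> i)" for i :: 'n
    by (intro continuous_on_inner continuous_on_grad_v continuous_on_const)
  have partial_meas: "second_partial_v i \<in> borel_measurable borel" for i :: 'n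
  proof -
    have "(\<lambda>x::'n. F' (x \<bullet> x)) \<in> borel_measurable borel"
      by (intro borel_measurable_continuous_onI continuous_on_compose2[OF continuous_on_F'] continuous_intros) auto
    then show ?thesis
      using borel_measurable_F''_inner unfolding second_partial_v_def[abs_def] by measurable
  qed
  have p_meas: "?p i \<in> borel_measurable borel" for i
    using cont(2) by (intro borel_measurable_continuous_onI continuous_on_mult continuous_on_inner continuous_on_const continuous_on_grad_v)
  have q_meas: "?q i \<in> borel_measurable borel" for i
    using partial_meas borel_measurable_continuous_onI[OF cont(1)] by (rule borel_measurable_times)
  have p_int: "integrable lborel (?p i)" for i
  proof (rule integrable_lborel_bounded_support[OF p_meas])
    show "bounded (?p i ` cball 0 R)"
      using cont(2) by (intro bounded_cball_image_continuous continuous_on_mult continuous_on_inner continuous_on_const continuous_on_grad_v)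
  qed (simp add: outside)
  have q_int: "integrable lborel (?q i)" if "i \<in> Basis" for i
  proof (rule integrable_lborel_bounded_support[OF q_meas])
    show "bounded (?q i ` cball 0 R)"
      using second_partial_v_bounded[OF that] bounded_cball_image_continuous[OF cont(1)] by (rule bounded_mult_comp)
  qed (simp add: outside)
  have by_parts_i: "integral\<^sup>L lborel (?p i) = - integral\<^sup>L lborel (?q i)" if "i \<in> Basis" for i
  proof -
    have "(LINT x:ball 0 R|lebesgue. ?p i x) = - (LINT x:ball 0 R|lebesgue. ?q i x)"
      using has_real_derivative_grad_v_component[OF that] partial_meas second_partial_v_bounded[OF that]
      by (intro set_integral_by_parts_test_fun[OF \<psi> grad_i])
    moreover have "(LINT x:ball 0 R|lebesgue. ?p i x) = integral\<^sup>L lborel (?p i)"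
      by (rule set_lebesgue_integral_eq_lborel[OF p_meas]) (simp add: outside)
    moreover have "(LINT x:ball 0 R|lebesgue. ?q i x) = integral\<^sup>L lborel (?q i)"
      by (rule set_lebesgue_integral_eq_lborel[OF q_meas]) (simp add: outside)
    ultimately show ?thesis
      by simp
  qed
  have q_sum: "integral\<^sup>L lborel (\<lambda>x. \<Sum>i\<in>Basis. ?q i x) = (\<Sum>i\<in>Basis. integral\<^sup>L lborel (?q i))"
    by (rule Bochner_Integration.integral_sum) (rule q_int)
  have "integral\<^sup>L lborel (\<lambda>x. \<Sum>i\<in>Basis. ?p i x) = (\<Sum>i\<in>Basis. integral\<^sup>L lborel (?p i))"
    by (rule Bochner_Integration.integral_sum) (rule p_int)
  also have "\<dots> = (\<Sum>i\<in>Basis. - integral\<^sup>L lborel (?q i))"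
    by (intro sum.cong refl) (rule by_parts_i)
  also have "\<dots> = - integral\<^sup>L lborel (\<lambda>x. \<Sum>i\<in>Basis. ?q i x)"
    unfolding q_sum by (rule sum_negf)
  finally have "integral\<^sup>L lborel (\<lambda>x. \<Sum>i\<in>Basis. ?p i x) = - integral\<^sup>L lborel (\<lambda>x. \<Sum>i\<in>Basis. ?q i x)" .
  moreover have "(\<lambda>x. \<Sum>i\<in>Basis. ?p i x) = (\<lambda>x. grad_v x \<bullet> D\<psi> x)"
    by (rule ext) (rule euclidean_inner[symmetric])
  moreover have "(\<lambda>x. \<Sum>i\<in>Basis. ?q i x) = (\<lambda>x. laplace_v x * \<psi> x)"
    by (simp add: laplace_v_def sum_distrib_right)
  moreover have "(LINT x:ball 0 R|lebesgue. grad_v x \<bullet> D\<psi> x) = integral\<^sup>L lborel (\<lambda>x. grad_v x \<bullet> D\<psi> x)"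
    using cont(2) continuous_on_grad_v
    by (intro set_lebesgue_integral_eq_lborel borel_measurable_continuous_onI continuous_on_inner) (simp_all add: outside)
  moreover have "(LINT x:ball 0 R|lebesgue. laplace_v x * \<psi> x) = integral\<^sup>L lborel (\<lambda>x. laplace_v x * \<psi> x)"
    using borel_measurable_laplace_v borel_measurable_continuous_onI[OF cont(1)]
    by (intro set_lebesgue_integral_eq_lborel borel_measurable_times) (simp_all add: outside)
  ultimately show ?thesis
    by simp
qed

lemma gfun_v: "gfun h \<sigma> (v x) = (if w (x \<bullet> x) < \<sigma> then exp (- Hfun h (w (x \<bullet> x))) else 0)"
  using gfun_psi[of "w (x \<bullet> x)"] w_bounds[of "x \<bullet> x"] by (simp add: v_def F_def)

lemma borel_measurable_gfun_v: "(\<lambda>x::'n::euclidean_space. gfun h \<sigma> (v x)) \<in> borel_measurable borel"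
proof -
  have "(\<lambda>t. if t \<in> {0..<\<sigma>} then exp (- Hfun h t) else 0) \<in> borel_measurable borel"
    by (intro borel_measurable_continuous_on_if continuous_intros continuous_on_Hfun) auto
  moreover have "(\<lambda>x::'n. w (x \<bullet> x)) \<in> borel_measurable borel"
    by (intro borel_measurable_continuous_onI continuous_on_compose2[OF continuous_on_w] continuous_intros) auto
  ultimately have "(\<lambda>x::'n. if w (x \<bullet> x) \<in> {0..<\<sigma>} then exp (- Hfun h (w (x \<bullet> x))) else 0) \<in> borel_measurable borel"
    by (rule measurable_compose[rotated])
  then show ?thesis
    using w_bounds by (simp add: gfun_v)
qed

lemma gfun_v_bounds: "0 \<le> gfun h \<sigma> (v x)" "gfun h \<sigma> (v x) \<le> 1"
  using exp_neg_Hfun_le_1[of "w (x \<bullet> x)"] w_bounds[of "x \<bullet> x"] by (auto simp: gfun_v)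

lemma neg_laplace_v_le:
  fixes x :: "'n::euclidean_space"
  assumes x: "x \<in> ball 0 R"
    and lam: "2 * real DIM('n) * slope_bound + 4 * R\<^sup>2 * (bend_bound + singular_bound) \<le> lam"
  shows "- laplace_v x \<le> lam * gfun h \<sigma> (v x)"
proof (cases "a < x \<bullet> x \<and> x \<bullet> x < a + d")
  case True
  have "x \<bullet> x \<le> R\<^sup>2"
    using x R_pos power_mono[of "norm x" R 2] by (simp add: power2_norm_eq_inner)
  then have "- laplace_v x \<le> (2 * real DIM('n) * slope_bound + 4 * R\<^sup>2 * bend_bound + 4 * R\<^sup>2 * singular_bound)
      * exp (- Hfun h (w (x \<bullet> x)))"
    using True neg_radial_laplacian_le[of "x \<bullet> x" "R\<^sup>2" "real DIM('n)"] by (simp add: laplace_v_eq)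
  also have "\<dots> \<le> lam * exp (- Hfun h (w (x \<bullet> x)))"
    using lam by (intro mult_right_mono) (simp_all add: algebra_simps)
  also have "\<dots> = lam * gfun h \<sigma> (v x)"
    using True w_strict_bounds[of "x \<bullet> x"] by (simp add: gfun_v)
  finally show ?thesis .
next
  case False
  have "0 \<le> lam"
    using lam bounds_nonneg order_trans[OF _ lam] by (simp add: zero_le_mult_iff)
  then show ?thesis
    using False gfun_v_bounds[of x] by (simp add: laplace_v_eq F'_outside F''_outside)
qed

lemma weak_subsolution_v:
  fixes \<phi> :: "'n::euclidean_space \<Rightarrow> real"
  assumes lam: "2 * real DIM('n) * slope_bound + 4 * R\<^sup>2 * (bend_bound + singular_bound) \<le> lam"
    and \<phi>: "H10 (ball 0 R) \<phi> G\<phi>" "\<forall>x\<in>ball 0 R. 0 \<le> \<phi> x"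
  shows "(LINT x:ball 0 R|lebesgue. grad_v x \<bullet> G\<phi> x) \<le> lam * (LINT x:ball 0 R|lebesgue. gfun h \<sigma> (v x) * \<phi> x)"
proof (rule weak_subsolution_of_pointwise[OF lmeasurable_ball])
  note on_ball = borel_measurable_lebesgue_on_of_borel
  show "grad_v \<in> borel_measurable (lebesgue_on (ball 0 R))"
    by (intro on_ball borel_measurable_continuous_onI continuous_on_grad_v)
  show "norm (grad_v x) \<le> 2 * slope_bound * R" if "x \<in> ball 0 R" for x :: 'n
    using abs_F'_le[of "x \<bullet> x"] that bounds_nonneg
    by (auto simp: grad_v_def intro!: mult_mono)
  show "laplace_v \<in> borel_measurable (lebesgue_on (ball (0::'n) R))"
    by (intro on_ball borel_measurable_laplace_v)
  show "\<bar>laplace_v x\<bar> \<le> 2 * real DIM('n) * slope_bound + 4 * R\<^sup>2 * (bend_bound + singular_bound)"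
    if "x \<in> ball 0 R" for x :: 'n
  proof -
    have "x \<bullet> x \<le> R\<^sup>2"
      using that R_pos power_mono[of "norm x" R 2] by (simp add: power2_norm_eq_inner)
    then have "4 * (x \<bullet> x) * \<bar>F'' (x \<bullet> x)\<bar> \<le> 4 * R\<^sup>2 * (bend_bound + singular_bound)"
      using abs_F''_le[of "x \<bullet> x"] by (intro mult_mono) auto
    moreover have "2 * real DIM('n) * \<bar>F' (x \<bullet> x)\<bar> \<le> 2 * real DIM('n) * slope_bound"
      using abs_F'_le[of "x \<bullet> x"] by simp
    moreover have "\<bar>laplace_v x\<bar> \<le> 2 * real DIM('n) * \<bar>F' (x \<bullet> x)\<bar> + 4 * (x \<bullet> x) * \<bar>F'' (x \<bullet> x)\<bar>"
      unfolding laplace_v_eq using abs_triangle_ineq[of "2 * real DIM('n) * F' (x \<bullet> x)" "4 * (x \<bullet> x) * F'' (x \<bullet> x)"]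
      by (simp add: abs_mult)
    ultimately show ?thesis
      by linarith
  qed
  show "(\<lambda>x. gfun h \<sigma> (v x)) \<in> borel_measurable (lebesgue_on (ball (0::'n) R))"
    by (intro on_ball borel_measurable_gfun_v)
  show "\<bar>gfun h \<sigma> (v x)\<bar> \<le> 1" for x :: 'n
    using gfun_v_bounds[of x] by simp
  show "(LINT x:ball 0 R|lebesgue. grad_v x \<bullet> D\<psi> x) = - (LINT x:ball 0 R|lebesgue. laplace_v x * \<psi> x)"
    if "test_fun (ball 0 R) \<psi> D\<psi>" for \<psi> D\<psi>
    using that by (rule by_parts_v)
  show "- laplace_v x \<le> lam * gfun h \<sigma> (v x)" if "x \<in> ball 0 R" for x :: 'n
    using that lam by (rule neg_laplace_v_le)
qed (use \<phi> in auto)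

lemma plateau_has_positive_measure: "0 < emeasure lebesgue {x \<in> ball (0::'n::euclidean_space) R. v x = psi h \<sigma>}"
proof -
  have "sqrt a < R"
    using transition_in_ball d_pos R_pos real_sqrt_less_iff[of a "R\<^sup>2"] by simp
  have "ball (0::'n) (sqrt a) \<subseteq> {x \<in> ball 0 R. v x = psi h \<sigma>}"
  proof
    fix x :: 'n
    assume "x \<in> ball 0 (sqrt a)"
    then have x: "norm x < sqrt a"
      by simp
    then have "(norm x)\<^sup>2 < (sqrt a)\<^sup>2"
      by (intro power_strict_mono) auto
    then have "x \<bullet> x \<le> a"
      using a_pos by (simp add: power2_norm_eq_inner)
    moreover have "x \<in> ball 0 R"
      using x \<open>sqrt a < R\<close> by simp
    ultimately show "x \<in> {x \<in> ball 0 R. v x = psi h \<sigma>}"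
      by (simp add: v_plateau)
  qed
  moreover have "{x \<in> ball (0::'n) R. v x = psi h \<sigma>} \<in> sets lebesgue"
  proof -
    have closed: "closed {x::'n. v x = psi h \<sigma>}"
      by (rule closed_Collect_eq[OF continuous_on_v continuous_on_const])
    have "ball 0 R \<inter> {x::'n. v x = psi h \<sigma>} \<in> sets borel"
      by (rule sets.Int[OF borel_open[OF open_ball] borel_closed[OF closed]])
    then show ?thesis
      by (simp add: Int_def)
  qed
  ultimately have "emeasure lebesgue (ball (0::'n) (sqrt a)) \<le> emeasure lebesgue {x \<in> ball (0::'n) R. v x = psi h \<sigma>}"
    by (rule emeasure_mono)
  moreover have "emeasure lebesgue (ball (0::'n) (sqrt a)) \<noteq> 0"
    using open_not_negligible[of "ball (0::'n) (sqrt a)"] a_pos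
    by (auto simp: negligible_iff_null_sets null_sets_def)
  ultimately show ?thesis
    by (simp add: order_less_le_trans[OF zero_less_iff_neq_zero[THEN iffD2]])
qed

end

theorem theorem4p6:
  fixes h :: "real \<Rightarrow> real" and \<sigma> \<gamma> C R :: real
  assumes "\<sigma> > 0"
    and "continuous_on {0..<\<sigma>} h"
    and "strict_mono_on {0..<\<sigma>} h"
    and "\<forall>s\<in>{0..<\<sigma>}. h s > 0"
    and "filterlim h at_top (at_left \<sigma>)"
    and "1 \<le> \<gamma>" and "\<gamma> < 2" and "C > 0"
    and "((\<lambda>s. (\<sigma> - s) powr \<gamma> * h s) \<longlongrightarrow> C) (at_left \<sigma>)"
    and "R > 0"
  shows "\<exists>lam0. \<forall>lam\<ge>lam0. \<exists>(v :: 'n::euclidean_space \<Rightarrow> real) Gv.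
           H10 (ball 0 R) v Gv \<and>
           (\<forall>x\<in>ball 0 R. 0 \<le> v x \<and> v x \<le> psi h \<sigma>) \<and>
           (\<forall>\<phi> G\<phi>. H10 (ball 0 R) \<phi> G\<phi> \<and> (\<forall>x\<in>ball 0 R. \<phi> x \<ge> 0) \<longrightarrow>
              (LINT x:ball 0 R|lebesgue. Gv x \<bullet> G\<phi> x)
                \<le> lam * (LINT x:ball 0 R|lebesgue. gfun h \<sigma> (v x) * \<phi> x)) \<and>
           emeasure lebesgue {x\<in>ball 0 R. v x = psi h \<sigma>} > 0"
proof -
  have "continuous_on {0..<\<sigma>} (\<lambda>s. (\<sigma> - s) powr \<gamma> * h s)"
    using assms(2) by (intro continuous_intros) auto
  then obtain M where M: "\<And>t. t \<in> {0..<\<sigma>} \<Longrightarrow> (\<sigma> - t) powr \<gamma> * h t \<le> M"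
    using continuous_on_atLeastLessThan_bounded_above assms(9) by blast
  obtain n where n: "3 \<le> n" "real n * \<gamma> \<le> 2 * real n - 2"
    using exponent_for_blowup[OF assms(7)] .
  interpret radial_subsolution h \<sigma> n "R\<^sup>2 / 3" "R\<^sup>2 / 3" \<gamma> M R
    by unfold_locales (use assms n M in auto)
  show ?thesis
  proof (intro exI[of _ "2 * real DIM('n) * slope_bound + 4 * R\<^sup>2 * (bend_bound + singular_bound)"]
      allI impI exI[of _ v] exI[of _ grad_v] conjI ballI)
    fix lam assume lam: "2 * real DIM('n) * slope_bound + 4 * R\<^sup>2 * (bend_bound + singular_bound) \<le> lam"
    show "H10 (ball 0 R) (v :: 'n \<Rightarrow> real) grad_v"
      by (rule H10_test_fun[OF test_fun_v])
    show "0 \<le> v x" "v x \<le> psi h \<sigma>" for x :: 'n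
      by (rule v_bounds)+
    show "(LINT x:ball 0 R|lebesgue. grad_v x \<bullet> G\<phi> x) \<le> lam * (LINT x:ball 0 R|lebesgue. gfun h \<sigma> (v x) * \<phi> x)"
      if "H10 (ball 0 R) \<phi> G\<phi> \<and> (\<forall>x\<in>ball 0 R. 0 \<le> \<phi> x)" for \<phi> :: "'n \<Rightarrow> real" and G\<phi>
      using weak_subsolution_v[OF lam] that by blast
    show "0 < emeasure lebesgue {x \<in> ball (0::'n) R. v x = psi h \<sigma>}"
      by (rule plateau_has_positive_measure)
  qed
qed

end
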